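(* Let $(\varepsilon_n)_{n\ge1}$ with $\varepsilon_n\downarrow0$, and $(\alpha_n)_{n\ge1}$ with $\alpha_n\in K$ for a compact $K\subset\mathcal A$, be arbitrary sequences. Then for each $h\in\mathcal H$ the sequence of measures $(P^{\varepsilon_n,h}_{\alpha_n})$ is contiguous to the sequence $(P^{\varepsilon_n}_{\alpha_n})$.
   Context: Fix $t>0$ and an open set $\mathcal A\subset\mathbb R^m$. Let $C_t$ be the space of continuous functions on $[0,t]$ with $\mathcal B_s=\sigma(x_u,u\le s)$, and $X$ the coordinate process. Let $a:[0,t]\times C_t\times\mathcal A\to\mathbb R$ be nonanticipative and satisfy, with constants $L_1,L_2$ independent of $\alpha$ and a nondecreasing right-continuous bounded $k\ge0$: $|a(s,x^1;\alpha)-a(s,x^2;\alpha)|\le L_1\int_0^s|x^1_u-x^2_u|dk_u+L_2|x^1_s-x^2_s|$, $|a(s,x;\alpha)|\le L_1\int_0^s(1+|x_u|)dk_u+L_2(1+|x_s|)$. Let $Y^0(\alpha)$ solve $dY_s=a(s,Y;\alpha)ds$, $Y_0=0$. For $\varepsilon>0$, $P^\varepsilon_\alpha$ is the law on $C_t$ of the solution of $dX_s=a_\varepsilon(s,X;\alpha)ds+dw_s$, $X_0=0$, where $a_\varepsilon(s,x;\alpha)=\varepsilon^{-1}a(s,\varepsilon x;\alpha)$. $\mathcal H$ is the family of bounded nonanticipative $h:[0,t]\times C_t\times\mathcal A\to\mathbb R$ such that for every $s,\alpha$, $h(s,\cdot;\alpha)$ is continuous at $Y^0(\alpha)$. For $h\in\mathcal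 H$, $P^{\varepsilon,h}_\alpha$ is the measure on $(C_t,\mathcal B_t)$ with $P^{\varepsilon,h}_\alpha\sim P^\varepsilon_\alpha$ and $dP^{\varepsilon,h}_\alpha/dP^\varepsilon_\alpha=\mathcal E_t(\varepsilon N^{\varepsilon,h}_\alpha)$ (Doléans exponential), where $N^{\varepsilon,h}_{\alpha,s}=\int_0^s h_\varepsilon(u,X;\alpha)(dX_u-a_\varepsilon(u,X;\alpha)du)$ and $h_\varepsilon(s,x;\alpha)=\varepsilon^{-1}h(s,\varepsilon x;\alpha)$. *)

theory Defs
  imports "HOL-Probability.Probability"
begin

definition Cpath :: "real \<Rightarrow> (real \<Rightarrow> real) set" where
  "Cpath t = {x. continuous_on {0..t} x \<and> (\<forall>u. u \<notin> {0..t} \<longrightarrow> x u = 0)}"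

definition restr_path :: "real \<Rightarrow> (real \<Rightarrow> real) \<Rightarrow> (real \<Rightarrow> real)" where
  "restr_path t x = (\<lambda>u. if u \<in> {0..t} then x u else 0)"

definition Bsig :: "real \<Rightarrow> real \<Rightarrow> (real \<Rightarrow> real) measure" where
  "Bsig t s = sigma (Cpath t)
     {{x \<in> Cpath t. x u \<in> A} | u A. u \<in> {0..s} \<and> A \<in> sets borel}"

definition nonanticipative ::
  "real \<Rightarrow> 'a set \<Rightarrow> (real \<Rightarrow> (real \<Rightarrow> real) \<Rightarrow> 'a \<Rightarrow> real) \<Rightarrow> bool" where
  "nonanticipative t \<A> a \<longleftrightarrow>
     (\<forall>\<alpha>\<in>\<A>. \<forall>s\<in>{0..t}.
        (\<lambda>(u, x). a u x \<alpha>) \<in>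
          borel_measurable (restrict_space borel {0..s} \<Otimes>\<^sub>M Bsig t s))"

definition scaled ::
  "real \<Rightarrow> (real \<Rightarrow> (real \<Rightarrow> real) \<Rightarrow> 'a \<Rightarrow> real) \<Rightarrow> real \<Rightarrow> (real \<Rightarrow> real) \<Rightarrow> 'a \<Rightarrow> real" where
  "scaled \<epsilon> a s x \<alpha> = a s (\<lambda>u. \<epsilon> * x u) \<alpha> / \<epsilon>"

definition ode_solution ::
  "real \<Rightarrow> (real \<Rightarrow> (real \<Rightarrow> real) \<Rightarrow> 'a \<Rightarrow> real) \<Rightarrow> 'a \<Rightarrow> (real \<Rightarrow> real) \<Rightarrow> bool" where
  "ode_solution t a \<alpha> Y \<longleftrightarrow> Y \<in> Cpath t \<and>
     (\<forall>s\<in>{0..t}. set_integrable lborel {0..s} (\<lambda>u. a u Y \<alpha>) \<and>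
                  Y s = (LINT u:{0..s}|lborel. a u Y \<alpha>))"

definition classH ::
  "real \<Rightarrow> 'a set \<Rightarrow> ('a \<Rightarrow> real \<Rightarrow> real) \<Rightarrow> (real \<Rightarrow> (real \<Rightarrow> real) \<Rightarrow> 'a \<Rightarrow> real) \<Rightarrow> bool" where
  "classH t \<A> Y0 h \<longleftrightarrow>
     (\<exists>B. \<forall>s\<in>{0..t}. \<forall>x\<in>Cpath t. \<forall>\<alpha>\<in>\<A>. \<bar>h s x \<alpha>\<bar> \<le> B) \<and>
     nonanticipative t \<A> h \<and>
     (\<forall>s\<in>{0..t}. \<forall>\<alpha>\<in>\<A>. \<forall>e>0. \<exists>\<delta>>0. \<forall>x\<in>Cpath t.
        (\<forall>u\<in>{0..t}. \<bar>x u - Y0 \<alpha> u\<bar> < \<delta>) \<longrightarrow> \<bar>h s x \<alpha> - h s (Y0 \<alpha>) \<alpha>\<bar> < e)"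

definition brownian_motion :: "'w measure \<Rightarrow> real \<Rightarrow> (real \<Rightarrow> 'w \<Rightarrow> real) \<Rightarrow> bool" where
  "brownian_motion M t w \<longleftrightarrow> prob_space M \<and>
     (\<forall>s\<in>{0..t}. w s \<in> borel_measurable M) \<and>
     (\<forall>\<omega>\<in>space M. w 0 \<omega> = 0 \<and> continuous_on {0..t} (\<lambda>s. w s \<omega>)) \<and>
     (\<forall>m (p::nat \<Rightarrow> real). p 0 \<ge> 0 \<and> p m \<le> t \<and> (\<forall>i<m. p i < p (Suc i)) \<longrightarrow>
        prob_space.indep_vars M (\<lambda>_. borel) (\<lambda>i \<omega>. w (p (Suc i)) \<omega> - w (p i) \<omega>) {..<m} \<and>
        (\<forall>i<m. distributed M lborel (\<lambda>\<omega>. w (p (Suc i)) \<omega> - w (p i) \<omega>)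
                  (\<lambda>y. ennreal (normal_density 0 (sqrt (p (Suc i) - p i)) y))))"

definition sde_solution ::
  "'w measure \<Rightarrow> real \<Rightarrow> (real \<Rightarrow> (real \<Rightarrow> real) \<Rightarrow> real) \<Rightarrow> (real \<Rightarrow> 'w \<Rightarrow> real)
     \<Rightarrow> (real \<Rightarrow> 'w \<Rightarrow> real) \<Rightarrow> bool" where
  "sde_solution M t b w X \<longleftrightarrow>
     (\<forall>s\<in>{0..t}. X s \<in> borel_measurable M) \<and>
     (\<forall>\<omega>\<in>space M. continuous_on {0..t} (\<lambda>s. X s \<omega>) \<and>
        (\<forall>s\<in>{0..t}.
           set_integrable lborel {0..s} (\<lambda>u. b u (restr_path t (\<lambda>r. X r \<omega>))) \<and>
           X s \<omega> = (LINT u:{0..s}|lborel. b u (restr_path t (\<lambda>r. X r \<omega>))) + w s \<omega>))"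

definition path_law :: "'w measure \<Rightarrow> real \<Rightarrow> (real \<Rightarrow> 'w \<Rightarrow> real) \<Rightarrow> (real \<Rightarrow> real) measure" where
  "path_law M t X = distr M (Bsig t t) (\<lambda>\<omega>. restr_path t (\<lambda>r. X r \<omega>))"

definition simple_integrand ::
  "'w measure \<Rightarrow> (real \<Rightarrow> 'w measure) \<Rightarrow> real \<Rightarrow> nat \<Rightarrow> (nat \<Rightarrow> real) \<Rightarrow> (nat \<Rightarrow> 'w \<Rightarrow> real) \<Rightarrow> bool" where
  "simple_integrand M F T m p \<xi> \<longleftrightarrow> p 0 = 0 \<and> p m = T \<and> (\<forall>i<m. p i < p (Suc i)) \<and>
     (\<forall>i<m. \<xi> i \<in> borel_measurable (F (p i)) \<and> (\<exists>B. \<forall>\<omega>\<in>space M. \<bar>\<xi> i \<omega>\<bar> \<le> B))"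

definition simple_process :: "nat \<Rightarrow> (nat \<Rightarrow> real) \<Rightarrow> (nat \<Rightarrow> 'w \<Rightarrow> real) \<Rightarrow> real \<Rightarrow> 'w \<Rightarrow> real" where
  "simple_process m p \<xi> s \<omega> = (\<Sum>i<m. \<xi> i \<omega> * indicator {p i<..p (Suc i)} s)"

definition simple_stoch_int ::
  "nat \<Rightarrow> (nat \<Rightarrow> real) \<Rightarrow> (nat \<Rightarrow> 'w \<Rightarrow> real) \<Rightarrow> (real \<Rightarrow> 'w \<Rightarrow> real) \<Rightarrow> 'w \<Rightarrow> real" where
  "simple_stoch_int m p \<xi> W \<omega> = (\<Sum>i<m. \<xi> i \<omega> * (W (p (Suc i)) \<omega> - W (p i) \<omega>))"

definition is_ito_integral ::
  "'w measure \<Rightarrow> (real \<Rightarrow> 'w measure) \<Rightarrow> real \<Rightarrow> (real \<Rightarrow> 'w \<Rightarrow> real) \<Rightarrow> (real \<Rightarrow> 'w \<Rightarrow> real)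
     \<Rightarrow> ('w \<Rightarrow> real) \<Rightarrow> bool" where
  "is_ito_integral M F T W H Z \<longleftrightarrow> Z \<in> borel_measurable M \<and>
     (\<exists>m p \<xi>. (\<forall>n. simple_integrand M F T (m n) (p n) (\<xi> n)) \<and>
        ((\<lambda>n. \<integral>\<^sup>+ \<omega>. (\<integral>\<^sup>+ s. indicator {0..T} s *
              ennreal ((H s \<omega> - simple_process (m n) (p n) (\<xi> n) s \<omega>)\<^sup>2) \<partial>lborel) \<partial>M)
           \<longlonglongrightarrow> 0) \<and>
        ((\<lambda>n. \<integral>\<^sup>+ \<omega>. ennreal ((Z \<omega> - simple_stoch_int (m n) (p n) (\<xi> n) W \<omega>)\<^sup>2) \<partial>M)
           \<longlonglongrightarrow> 0))"

definition contiguous :: "(nat \<Rightarrow> 'b measure) \<Rightarrow> (nat \<Rightarrow> 'b measure) \<Rightarrow> bool" where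
  "contiguous Q P \<longleftrightarrow>
     (\<forall>A. (\<forall>n. A n \<in> sets (P n)) \<longrightarrow>
        (\<lambda>n. emeasure (P n) (A n)) \<longlonglongrightarrow> 0 \<longrightarrow>
        (\<lambda>n. emeasure (Q n) (A n)) \<longlonglongrightarrow> 0)"

end

theory Submission
  imports Defs
begin

text \<open>
  The likelihood ratios \<open>d\<^sub>n\<close> of \<open>P\<^sup>\<epsilon>\<^sup>,\<^sup>h\<close> with respect to \<open>P\<^sup>\<epsilon>\<close> are bounded in \<open>L\<^sup>2\<close> uniformly
  in \<open>n\<close>, and \<open>Q(A) \<le> c P(A) + c\<^sup>-\<^sup>1 \<integral> d\<^sup>2 dP\<close> for every \<open>c > 0\<close> then gives contiguity.
  The \<open>L\<^sup>2\<close> bound: \<open>\<epsilon> h\<^sub>\<epsilon>(s, x) = h(s, \<epsilon> x)\<close> is bounded by some \<open>B\<close>, so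
  \<open>d\<^sup>2 = exp (2\<epsilon>Z - 4\<epsilon>\<^sup>2\<integral>h\<^sub>\<epsilon>\<^sup>2) \<cdot> exp (3\<epsilon>\<^sup>2\<integral>h\<^sub>\<epsilon>\<^sup>2) \<le> exp (3 t B\<^sup>2) \<cdot> exp (2\<epsilon>Z - 4\<epsilon>\<^sup>2\<integral>h\<^sub>\<epsilon>\<^sup>2)\<close>, and
  the last factor, a stochastic exponential, has mean at most one: it has mean exactly one for
  simple integrands, and Fatou's lemma passes to the limit. The Ito integral \<open>Z\<close> is taken
  against the innovation \<open>x\<^sub>s - \<integral>\<^sub>0\<^sup>s a\<^sub>\<epsilon>(u, x) du\<close>, which under the law of the solution is a
  Brownian motion for the coordinate filtration, because the solution is adapted to the
  filtration of its driving noise (Picard iteration).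

  Only boundedness and nonanticipativity of \<open>h\<close> enter.
\<close>

section \<open>Gaussian tilts\<close>

lemma nn_integral_normal_density_exp_tilt:
  fixes \<sigma> c :: real
  assumes "\<sigma> > 0"
  shows "(\<integral>\<^sup>+y. ennreal (normal_density 0 \<sigma> y * exp (c*y - c\<^sup>2*\<sigma>\<^sup>2/2)) \<partial>lborel) = 1"
proof -
  have shift: "normal_density 0 \<sigma> y * exp (c*y - c\<^sup>2*\<sigma>\<^sup>2/2) = normal_density (c*\<sigma>\<^sup>2) \<sigma> y" for y
  proof -
    have "-(y - 0)\<^sup>2/ (2 * \<sigma>\<^sup>2) + (c*y - c\<^sup>2*\<sigma>\<^sup>2/2) = -(y - c*\<sigma>\<^sup>2)\<^sup>2/ (2 * \<sigma>\<^sup>2)"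
      using assms by (simp add: field_simps power2_eq_square)
    then show ?thesis unfolding normal_density_def
      using assms by (simp add: exp_add[symmetric])
  qed
  interpret prob_space "density lborel (\<lambda>x. ennreal (normal_density (c*\<sigma>\<^sup>2) \<sigma> x))"
    using assms by (rule prob_space_normal_density)
  show ?thesis
    using emeasure_space_1 by (simp add: shift emeasure_density)
qed

lemma (in prob_space) distr_pair_eq_pair_measure_of_indep:
  assumes F: "subalgebra M F" and V: "V \<in> measurable F S" and Y: "Y \<in> measurable M N"
    and indep: "\<And>A C. A \<in> sets F \<Longrightarrow> C \<in> sets N \<Longrightarrow>
       prob (A \<inter> (Y -` C \<inter> space M)) = prob A * prob (Y -` C \<inter> space M)"
  shows "distr M S V \<Otimes>\<^sub>M distr M N Y = distr M (S \<Otimes>\<^sub>M N) (\<lambda>x. (V x, Y x))"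
proof -
  have VM: "V \<in> measurable M S" using measurable_from_subalg[OF F V] .
  interpret DV: prob_space "distr M S V" by (rule prob_space_distr[OF VM])
  interpret DY: prob_space "distr M N Y" by (rule prob_space_distr[OF Y])
  interpret DVY: pair_prob_space "distr M S V" "distr M N Y" ..
  have VY: "(\<lambda>x. (V x, Y x)) \<in> measurable M (S \<Otimes>\<^sub>M N)" using VM Y by (rule measurable_Pair)
  show ?thesis
  proof (rule pair_measure_eqI)
    show "sigma_finite_measure (distr M S V)" "sigma_finite_measure (distr M N Y)" ..
    show "sets (distr M S V \<Otimes>\<^sub>M distr M N Y) = sets (distr M (S \<Otimes>\<^sub>M N) (\<lambda>x. (V x, Y x)))"
      by simp
    fix A B assume A: "A \<in> sets (distr M S V)" and B: "B \<in> sets (distr M N Y)"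
    have AF: "V -` A \<inter> space M \<in> sets F"
      using measurable_sets[OF V, of A] A F by (simp add: subalgebra_def)
    have "emeasure (distr M (S \<Otimes>\<^sub>M N) (\<lambda>x. (V x, Y x))) (A \<times> B)
        = emeasure M ((V -` A \<inter> space M) \<inter> (Y -` B \<inter> space M))"
      using A B by (subst emeasure_distr[OF VY]) (auto intro!: arg_cong[where f="emeasure M"])
    also have "\<dots> = emeasure M (V -` A \<inter> space M) * emeasure M (Y -` B \<inter> space M)"
      using indep[OF AF, of B] B by (simp add: emeasure_eq_measure measure_nonneg ennreal_mult)
    also have "\<dots> = emeasure (distr M S V) A * emeasure (distr M N Y) B"
      using A B by (simp add: emeasure_distr[OF VM] emeasure_distr[OF Y])
    finally show "emeasure (distr M S V) A * emeasure (distr M N Y) B =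
       emeasure (distr M (S \<Otimes>\<^sub>M N) (\<lambda>x. (V x, Y x))) (A \<times> B)" by simp
  qed
qed

text \<open>Conditioning on \<open>F\<close> freezes \<open>G\<close> and \<open>\<xi>\<close>, and a Gaussian tilt with frozen \<open>\<xi>\<close> has mean 1.\<close>

lemma (in prob_space) nn_integral_exp_tilt_indep_gaussian:
  fixes G \<xi> Y :: "'a \<Rightarrow> real"
  assumes F: "subalgebra M F" and Y: "Y \<in> borel_measurable M"
    and indep: "\<And>A C. A \<in> sets F \<Longrightarrow> C \<in> sets borel \<Longrightarrow>
       prob (A \<inter> (Y -` C \<inter> space M)) = prob A * prob (Y -` C \<inter> space M)"
    and Y_normal: "distr M lborel Y = density lborel (\<lambda>y. ennreal (normal_density 0 \<sigma> y))"
    and \<sigma>: "\<sigma> > 0"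
    and G: "G \<in> borel_measurable F" "\<And>x. x \<in> space M \<Longrightarrow> G x \<ge> 0"
    and \<xi>: "\<xi> \<in> borel_measurable F"
  shows "(\<integral>\<^sup>+x. ennreal (G x * exp (c * \<xi> x * Y x - c\<^sup>2 * (\<xi> x)\<^sup>2 * \<sigma>\<^sup>2 / 2)) \<partial>M)
         = (\<integral>\<^sup>+x. ennreal (G x) \<partial>M)"
proof -
  define V where "V = (\<lambda>x. (G x, \<xi> x))"
  let ?S = "borel \<Otimes>\<^sub>M borel :: (real \<times> real) measure"
  have VF: "V \<in> measurable F ?S" unfolding V_def using G \<xi> by measurable
  have VM: "V \<in> measurable M ?S" using measurable_from_subalg[OF F VF] .
  have YM: "Y \<in> measurable M lborel" using Y by simp
  interpret DY: prob_space "distr M lborel Y" by (rule prob_space_distr[OF YM])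
  have prod: "distr M ?S V \<Otimes>\<^sub>M distr M lborel Y = distr M (?S \<Otimes>\<^sub>M lborel) (\<lambda>x. (V x, Y x))"
    by (rule distr_pair_eq_pair_measure_of_indep[OF F VF YM]) (use indep in simp)
  define \<phi> where "\<phi> = (\<lambda>z::(real\<times>real)\<times>real.
     ennreal (fst (fst z) * exp (c * snd (fst z) * snd z - c\<^sup>2 * (snd (fst z))\<^sup>2 * \<sigma>\<^sup>2 / 2)))"
  have \<phi>: "\<phi> \<in> borel_measurable (?S \<Otimes>\<^sub>M lborel)" unfolding \<phi>_def by measurable
  have inner: "(\<integral>\<^sup>+y. \<phi> (v,y) \<partial>distr M lborel Y) = ennreal (fst v)" for v :: "real \<times> real"
  proof -
    have "(\<integral>\<^sup>+y. \<phi> (v,y) \<partial>distr M lborel Y)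
        = (\<integral>\<^sup>+y. ennreal (normal_density 0 \<sigma> y) * \<phi> (v,y) \<partial>lborel)"
      unfolding Y_normal by (rule nn_integral_density) (simp_all add: \<phi>_def)
    also have "\<dots> = (\<integral>\<^sup>+y. ennreal (fst v) * ennreal (normal_density 0 \<sigma> y
                       * exp (c * snd v * y - (c * snd v)\<^sup>2 * \<sigma>\<^sup>2 / 2)) \<partial>lborel)"
      unfolding \<phi>_def
      by (intro nn_integral_cong)
         (simp add: ennreal_mult'[symmetric] normal_density_nonneg power_mult_distrib ac_simps,
          rule ennreal_mult'', simp add: normal_density_nonneg)
    also have "\<dots> = ennreal (fst v)"
      using nn_integral_normal_density_exp_tilt[OF \<sigma>] by (simp add: nn_integral_cmult)
    finally show ?thesis .
  qed
  have "(\<integral>\<^sup>+x. ennreal (G x * exp (c * \<xi> x * Y x - c\<^sup>2 * (\<xi> x)\<^sup>2 * \<sigma>\<^sup>2 / 2)) \<partial>M)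
      = (\<integral>\<^sup>+z. \<phi> z \<partial>distr M (?S \<Otimes>\<^sub>M lborel) (\<lambda>x. (V x, Y x)))"
    using VM YM \<phi> by (subst nn_integral_distr) (auto simp: \<phi>_def V_def)
  also have "\<dots> = (\<integral>\<^sup>+v. \<integral>\<^sup>+y. \<phi> (v,y) \<partial>distr M lborel Y \<partial>distr M ?S V)"
    unfolding prod[symmetric] by (rule DY.nn_integral_fst[symmetric]) (use \<phi> in simp)
  also have "\<dots> = (\<integral>\<^sup>+x. ennreal (G x) \<partial>M)"
    by (simp add: inner, subst nn_integral_distr[OF VM]) (simp_all add: V_def)
  finally show ?thesis .
qed

lemma partition_mono:
  fixes p :: "nat \<Rightarrow> real"
  assumes "\<forall>i<m. p i < p (Suc i)" "i \<le> j" "j \<le> m"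
  shows "p i \<le> p j"
  using assms(2,3)
proof (induction j)
  case (Suc j)
  then show ?case
    using assms(1) by (cases "i = Suc j") (auto intro: order.trans[OF _ less_imp_le])
qed simp

locale filtered_brownian_motion = prob_space P
  for P :: "'x measure" and F :: "real \<Rightarrow> 'x measure" and T :: real and W :: "real \<Rightarrow> 'x \<Rightarrow> real" +
  assumes filtration_subalgebra: "\<And>s. 0 \<le> s \<Longrightarrow> s \<le> T \<Longrightarrow> subalgebra P (F s)"
    and filtration_mono: "\<And>s s'. 0 \<le> s \<Longrightarrow> s \<le> s' \<Longrightarrow> s' \<le> T \<Longrightarrow> subalgebra (F s') (F s)"
    and adapted: "\<And>s. 0 \<le> s \<Longrightarrow> s \<le> T \<Longrightarrow> W s \<in> borel_measurable (F s)"
    and increment_indep: "\<And>p q A C. 0 \<le> p \<Longrightarrow> p < q \<Longrightarrow> q \<le> T \<Longrightarrow> A \<in> sets (F p) \<Longrightarrow>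
        C \<in> sets borel \<Longrightarrow>
        prob (A \<inter> ((\<lambda>x. W q x - W p x) -` C \<inter> space P))
          = prob A * prob ((\<lambda>x. W q x - W p x) -` C \<inter> space P)"
    and increment_normal: "\<And>p q. 0 \<le> p \<Longrightarrow> p < q \<Longrightarrow> q \<le> T \<Longrightarrow>
        distr P lborel (\<lambda>x. W q x - W p x) = density lborel (\<lambda>y. ennreal (normal_density 0 (sqrt (q - p)) y))"
begin

lemma measurable_filtration:
  "f \<in> borel_measurable (F s) \<Longrightarrow> 0 \<le> s \<Longrightarrow> s \<le> T \<Longrightarrow> f \<in> borel_measurable P"
  using measurable_from_subalg filtration_subalgebra by blast

lemma measurable_filtration_mono:
  "f \<in> borel_measurable (F s) \<Longrightarrow> 0 \<le> s \<Longrightarrow> s \<le> s' \<Longrightarrow> s' \<le> T \<Longrightarrow> f \<in> borel_measurable (F s')"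
  using measurable_from_subalg filtration_mono by blast

text \<open>Peel off the last increment, which is independent of the past and Gaussian.\<close>

lemma nn_integral_exp_simple_stoch_int:
  assumes si: "simple_integrand P F T m p \<xi>"
  shows "(\<integral>\<^sup>+x. ennreal (exp (c * simple_stoch_int m p \<xi> W x
            - c\<^sup>2/2 * (\<Sum>i<m. (\<xi> i x)\<^sup>2 * (p (Suc i) - p i)))) \<partial>P) = 1"
proof -
  have p0: "p 0 = 0" and pm: "p m = T" and pinc: "\<forall>i<m. p i < p (Suc i)"
    and \<xi>F: "\<And>i. i < m \<Longrightarrow> \<xi> i \<in> borel_measurable (F (p i))"
    using si unfolding simple_integrand_def by auto
  have p_range: "0 \<le> p i \<and> p i \<le> T" if "i \<le> m" for i
    using partition_mono[OF pinc, of 0 i] partition_mono[OF pinc, of i m] p0 pm that by auto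
  define E where "E j x = exp (c * (\<Sum>i<j. \<xi> i x * (W (p (Suc i)) x - W (p i) x))
            - c\<^sup>2/2 * (\<Sum>i<j. (\<xi> i x)\<^sup>2 * (p (Suc i) - p i)))" for j x
  have "E j \<in> borel_measurable (F (p j)) \<and> (\<integral>\<^sup>+x. ennreal (E j x) \<partial>P) = 1" if "j \<le> m" for j
    using that
  proof (induction j)
    case 0
    have "E 0 = (\<lambda>x. 1)" by (simp add: E_def fun_eq_iff)
    then show ?case using emeasure_space_1 by simp
  next
    case (Suc j)
    then have IH: "E j \<in> borel_measurable (F (p j))" "(\<integral>\<^sup>+x. ennreal (E j x) \<partial>P) = 1"
      and jm: "j < m" by auto
    have pj: "0 \<le> p j" "p j < p (Suc j)" "p (Suc j) \<le> T"
      using p_range[of j] p_range[of "Suc j"] pinc jm by auto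
    define \<sigma> where "\<sigma> = sqrt (p (Suc j) - p j)"
    have \<sigma>: "\<sigma> > 0" "\<sigma>\<^sup>2 = p (Suc j) - p j" using pj by (auto simp: \<sigma>_def)
    have E_Suc: "E (Suc j) x = E j x * exp (c * \<xi> j x * (W (p (Suc j)) x - W (p j) x)
        - c\<^sup>2 * (\<xi> j x)\<^sup>2 * \<sigma>\<^sup>2 / 2)" for x
      unfolding E_def \<sigma>(2) by (simp add: exp_add[symmetric] field_simps)
    have W_P: "W (p (Suc j)) \<in> borel_measurable P" "W (p j) \<in> borel_measurable P"
      using measurable_filtration[OF adapted] pj by auto
    have "(\<integral>\<^sup>+x. ennreal (E (Suc j) x) \<partial>P) = (\<integral>\<^sup>+x. ennreal (E j x) \<partial>P)"
      unfolding E_Suc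
    proof (rule nn_integral_exp_tilt_indep_gaussian[OF filtration_subalgebra _ _ _ \<sigma>(1) IH(1) _ \<xi>F[OF jm]])
      show "(\<lambda>x. W (p (Suc j)) x - W (p j) x) \<in> borel_measurable P" using W_P by measurable
      show "distr P lborel (\<lambda>x. W (p (Suc j)) x - W (p j) x) = density lborel (\<lambda>y. ennreal (normal_density 0 \<sigma> y))"
        using increment_normal[OF pj] by (simp add: \<sigma>_def)
    qed (use pj increment_indep in \<open>auto simp: E_def\<close>)
    moreover have "E (Suc j) \<in> borel_measurable (F (p (Suc j)))"
    proof -
      have [measurable]: "E j \<in> borel_measurable (F (p (Suc j)))" "\<xi> j \<in> borel_measurable (F (p (Suc j)))"
          "W (p (Suc j)) \<in> borel_measurable (F (p (Suc j)))" "W (p j) \<in> borel_measurable (F (p (Suc j)))"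
        using measurable_filtration_mono[OF IH(1)] measurable_filtration_mono[OF \<xi>F[OF jm]]
          adapted measurable_filtration_mono[OF adapted] pj by auto
      show ?thesis unfolding E_Suc[abs_def] by measurable
    qed
    ultimately show ?case using IH(2) by simp
  qed
  moreover have "E m = (\<lambda>x. exp (c * simple_stoch_int m p \<xi> W x
            - c\<^sup>2/2 * (\<Sum>i<m. (\<xi> i x)\<^sup>2 * (p (Suc i) - p i))))"
    by (simp add: E_def simple_stoch_int_def fun_eq_iff)
  ultimately show ?thesis by fastforce
qed

end

section \<open>The exponential bound for Ito integrals\<close>

lemma simple_process_sq_integral:
  fixes p :: "nat \<Rightarrow> real" and \<xi> :: "nat \<Rightarrow> 'w \<Rightarrow> real"
  assumes p0: "p 0 = 0" and pm: "p m = T" and pinc: "\<forall>i<m. p i < p (Suc i)"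
  shows "(\<integral>\<^sup>+s. indicator {0..T} s * ennreal ((simple_process m p \<xi> s \<omega>)\<^sup>2) \<partial>lborel)
       = ennreal (\<Sum>i<m. (\<xi> i \<omega>)\<^sup>2 * (p (Suc i) - p i))"
proof -
  have ple: "\<And>i j. i \<le> j \<Longrightarrow> j \<le> m \<Longrightarrow> p i \<le> p j" using partition_mono[OF pinc] by blast
  have disj: "s \<notin> {p j<..p (Suc j)}" if "s \<in> {p i<..p (Suc i)}" "i < m" "j < m" "i \<noteq> j" for s i j
  proof (cases "i < j")
    case True
    then have "p (Suc i) \<le> p j" using ple[of "Suc i" j] that by auto
    then show ?thesis using that by auto
  next
    case False
    then have "p (Suc j) \<le> p i" using ple[of "Suc j" i] that by auto
    then show ?thesis using that by auto
  qed
  have sq: "indicator {0..T} s * ennreal ((simple_process m p \<xi> s \<omega>)\<^sup>2)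
      = (\<Sum>i<m. ennreal ((\<xi> i \<omega>)\<^sup>2) * indicator {p i<..p (Suc i)} s)" for s
  proof (cases "\<exists>i<m. s \<in> {p i<..p (Suc i)}")
    case True
    then obtain i where i: "i < m" "s \<in> {p i<..p (Suc i)}" by blast
    have others: "\<And>j. j \<in> {..<m} - {i} \<Longrightarrow> s \<notin> {p j<..p (Suc j)}" using disj[OF i(2) i(1)] by auto
    have sp: "simple_process m p \<xi> s \<omega> = \<xi> i \<omega>"
      unfolding simple_process_def
      by (subst sum.remove[of _ i]) (use i others in \<open>auto intro!: sum.neutral\<close>)
    have "0 \<le> p i" "p (Suc i) \<le> T" using ple[of 0 i] ple[of "Suc i" m] i p0 pm by auto
    then have "s \<in> {0..T}" using i by auto
    moreover have "(\<Sum>j<m. ennreal ((\<xi> j \<omega>)\<^sup>2) * indicator {p j<..p (Suc j)} s) = ennreal ((\<xi> i \<omega>)\<^sup>2)"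
      by (subst sum.remove[of _ i]) (use i others in \<open>auto intro!: sum.neutral\<close>)
    ultimately show ?thesis using sp by simp
  next
    case False
    then have "simple_process m p \<xi> s \<omega> = 0" unfolding simple_process_def
      by (auto intro!: sum.neutral)
    then show ?thesis using False by (auto intro!: sum.neutral[symmetric])
  qed
  have "(\<integral>\<^sup>+s. indicator {0..T} s * ennreal ((simple_process m p \<xi> s \<omega>)\<^sup>2) \<partial>lborel)
      = (\<integral>\<^sup>+s. (\<Sum>i<m. ennreal ((\<xi> i \<omega>)\<^sup>2) * indicator {p i<..p (Suc i)} s) \<partial>lborel)"
    by (simp add: sq)
  also have "\<dots> = (\<Sum>i<m. \<integral>\<^sup>+s. ennreal ((\<xi> i \<omega>)\<^sup>2) * indicator {p i<..p (Suc i)} s \<partial>lborel)"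
    by (rule nn_integral_sum) auto
  also have "\<dots> = (\<Sum>i<m. ennreal ((\<xi> i \<omega>)\<^sup>2) * ennreal (p (Suc i) - p i))"
  proof (rule sum.cong[OF refl])
    fix i assume "i \<in> {..<m}"
    then have "p i \<le> p (Suc i)" using pinc by (auto intro: less_imp_le)
    then show "(\<integral>\<^sup>+s. ennreal ((\<xi> i \<omega>)\<^sup>2) * indicator {p i<..p (Suc i)} s \<partial>lborel)
        = ennreal ((\<xi> i \<omega>)\<^sup>2) * ennreal (p (Suc i) - p i)"
      by (simp add: nn_integral_cmult_indicator emeasure_lborel_Ioc)
  qed
  also have "\<dots> = ennreal (\<Sum>i<m. (\<xi> i \<omega>)\<^sup>2 * (p (Suc i) - p i))"
  proof -
    have nn: "\<And>i. i < m \<Longrightarrow> 0 \<le> p (Suc i) - p i" using pinc by (auto intro: less_imp_le)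
    have "(\<Sum>i<m. ennreal ((\<xi> i \<omega>)\<^sup>2) * ennreal (p (Suc i) - p i)) = (\<Sum>i<m. ennreal ((\<xi> i \<omega>)\<^sup>2 * (p (Suc i) - p i)))"
      by (rule sum.cong[OF refl]) (simp add: ennreal_mult')
    also have "\<dots> = ennreal (\<Sum>i<m. (\<xi> i \<omega>)\<^sup>2 * (p (Suc i) - p i))"
      by (rule sum_ennreal) (use nn in simp)
    finally show ?thesis .
  qed
  finally show ?thesis .
qed

lemma tendsto_0_of_suminf_ennreal_finite:
  fixes a :: "nat \<Rightarrow> ennreal"
  assumes "(\<Sum>k. a k) \<noteq> \<top>"
  shows "a \<longlonglongrightarrow> 0"
proof -
  have "a k \<noteq> \<top>" for k
  proof
    assume "a k = \<top>"
    moreover have "sum a {k} \<le> (\<Sum>k. a k)" by (rule sum_le_suminf[OF summableI]) auto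
    ultimately show False using assms by (simp add: top_unique)
  qed
  then have a: "a = (\<lambda>k. ennreal (enn2real (a k)))"
    by (auto simp: fun_eq_iff ennreal_enn2real_if)
  have "summable (\<lambda>k. enn2real (a k))"
    using assms by (subst (asm) a) (intro summable_suminf_not_top, auto)
  then have "(\<lambda>k. ennreal (enn2real (a k))) \<longlonglongrightarrow> ennreal 0"
    by (intro tendsto_ennrealI summable_LIMSEQ_zero)
  then show ?thesis by (subst a) simp
qed

text \<open>Pick \<open>r k\<close> with \<open>\<integral> g (r k) \<le> 2\<^sup>-\<^sup>k\<close>, so that \<open>\<Sum>k g (r k)\<close> is integrable.\<close>

lemma AE_subseq_tendsto_0_of_nn_integral_tendsto_0:
  fixes g :: "nat \<Rightarrow> 'a \<Rightarrow> ennreal"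
  assumes g: "\<And>n. g n \<in> borel_measurable M"
    and lim: "(\<lambda>n. \<integral>\<^sup>+x. g n x \<partial>M) \<longlonglongrightarrow> 0"
  obtains r where "strict_mono r" "AE x in M. (\<lambda>j. g (r j) x) \<longlonglongrightarrow> 0"
proof -
  have "\<forall>k. \<exists>N. \<forall>n\<ge>N. (\<integral>\<^sup>+x. g n x \<partial>M) < ennreal ((1/2)^k)"
    using order_tendstoD(2)[OF lim] by (simp add: eventually_sequentially)
  then obtain N where N: "\<And>k n. n \<ge> N k \<Longrightarrow> (\<integral>\<^sup>+x. g n x \<partial>M) < ennreal ((1/2)^k)"
    by metis
  define r where "r k = k + (\<Sum>i\<le>k. N i)" for k
  have r: "strict_mono r" unfolding strict_mono_Suc_iff r_def by simp
  have "N k \<le> r k" for k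
    using member_le_sum[of k "{..k}" N] by (simp add: r_def)
  then have small: "(\<integral>\<^sup>+x. g (r k) x \<partial>M) \<le> ennreal ((1/2)^k)" for k
    using N less_imp_le by blast
  have "(\<integral>\<^sup>+x. (\<Sum>k. g (r k) x) \<partial>M) = (\<Sum>k. \<integral>\<^sup>+x. g (r k) x \<partial>M)"
    by (rule nn_integral_suminf) (use g in auto)
  also have "\<dots> \<le> (\<Sum>k. ennreal ((1/2)^k))"
    by (intro suminf_le small) auto
  also have "\<dots> = ennreal (\<Sum>k. (1/2::real)^k)"
    by (rule suminf_ennreal2) (auto intro: summable_geometric)
  finally have fin: "(\<integral>\<^sup>+x. (\<Sum>k. g (r k) x) \<partial>M) \<noteq> \<top>"
    by (auto simp: top_unique)
  have "(\<lambda>x. \<Sum>k. g (r k) x) \<in> borel_measurable M"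
    using g by (intro borel_measurable_suminf_order) auto
  from nn_integral_PInf_AE[OF this] fin
  have "AE x in M. (\<Sum>k. g (r k) x) \<noteq> \<top>" by simp
  then have "AE x in M. (\<lambda>j. g (r j) x) \<longlonglongrightarrow> 0"
    by eventually_elim (rule tendsto_0_of_suminf_ennreal_finite)
  with r show ?thesis by (rule that)
qed

lemma nn_integral_le_of_AE_tendsto:
  fixes f :: "nat \<Rightarrow> 'a \<Rightarrow> ennreal"
  assumes f: "\<And>j. f j \<in> borel_measurable M"
    and lim: "AE x in M. (\<lambda>j. f j x) \<longlonglongrightarrow> g x"
    and bound: "\<And>j. (\<integral>\<^sup>+x. f j x \<partial>M) \<le> C"
  shows "(\<integral>\<^sup>+x. g x \<partial>M) \<le> C"
proof -
  have "AE x in M. g x = liminf (\<lambda>j. f j x)"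
    using lim by eventually_elim (metis lim_imp_Liminf trivial_limit_sequentially)
  then have "(\<integral>\<^sup>+x. g x \<partial>M) = (\<integral>\<^sup>+x. liminf (\<lambda>j. f j x) \<partial>M)"
    by (rule nn_integral_cong_AE)
  also have "\<dots> \<le> liminf (\<lambda>j. \<integral>\<^sup>+x. f j x \<partial>M)"
    by (rule nn_integral_liminf) (rule f)
  also have "\<dots> \<le> C"
    by (rule Liminf_le) (simp_all add: bound)
  finally show ?thesis .
qed

lemma tendsto_of_ennreal_sq_diff_tendsto_0:
  fixes z :: real
  assumes "(\<lambda>j. ennreal ((z - y j)\<^sup>2)) \<longlonglongrightarrow> 0"
  shows "y \<longlonglongrightarrow> z"
proof -
  have "(\<lambda>j. (z - y j)\<^sup>2) \<longlonglongrightarrow> 0"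
    using assms by (subst (asm) ennreal_tendsto_0_iff) auto
  then have "(\<lambda>j. sqrt ((z - y j)\<^sup>2)) \<longlonglongrightarrow> sqrt 0" by (rule tendsto_real_sqrt)
  then have "(\<lambda>j. \<bar>z - y j\<bar>) \<longlonglongrightarrow> 0" by simp
  then have "(\<lambda>j. z - y j) \<longlonglongrightarrow> 0" by (rule tendsto_rabs_zero_cancel)
  then have "(\<lambda>j. z - (z - y j)) \<longlonglongrightarrow> z - 0" by (intro tendsto_diff tendsto_const)
  then show ?thesis by simp
qed

lemma nn_integral_indicator_sq_le:
  fixes f g :: "'a \<Rightarrow> real"
  assumes [measurable]: "f \<in> borel_measurable M" "g \<in> borel_measurable M" "A \<in> sets M"
  shows "(\<integral>\<^sup>+s. indicator A s * ennreal ((g s)\<^sup>2) \<partial>M)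
    \<le> 2 * (\<integral>\<^sup>+s. indicator A s * ennreal ((f s)\<^sup>2) \<partial>M) + 2 * (\<integral>\<^sup>+s. indicator A s * ennreal ((f s - g s)\<^sup>2) \<partial>M)"
proof -
  have real_le: "(g s)\<^sup>2 \<le> 2 * (f s)\<^sup>2 + 2 * (f s - g s)\<^sup>2" for s
    using zero_le_power2[of "2 * f s - g s"] by (simp add: power2_eq_square algebra_simps)
  have ennreal_le: "ennreal ((g s)\<^sup>2) \<le> 2 * ennreal ((f s)\<^sup>2) + 2 * ennreal ((f s - g s)\<^sup>2)" for s
  proof -
    have "ennreal ((g s)\<^sup>2) \<le> ennreal (2 * (f s)\<^sup>2 + 2 * (f s - g s)\<^sup>2)"
      by (rule ennreal_leI) (rule real_le)
    also have "\<dots> = 2 * ennreal ((f s)\<^sup>2) + 2 * ennreal ((f s - g s)\<^sup>2)"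
      by (subst ennreal_plus) (simp_all add: ennreal_mult)
    finally show ?thesis .
  qed
  have "indicator A s * ennreal ((g s)\<^sup>2)
      \<le> 2 * (indicator A s * ennreal ((f s)\<^sup>2)) + 2 * (indicator A s * ennreal ((f s - g s)\<^sup>2))" for s
    using ennreal_le[of s] by (cases "s \<in> A") simp_all
  then have "(\<integral>\<^sup>+s. indicator A s * ennreal ((g s)\<^sup>2) \<partial>M)
     \<le> (\<integral>\<^sup>+s. 2 * (indicator A s * ennreal ((f s)\<^sup>2)) + 2 * (indicator A s * ennreal ((f s - g s)\<^sup>2)) \<partial>M)"
    by (rule nn_integral_mono)
  also have "\<dots> = (\<integral>\<^sup>+s. 2 * (indicator A s * ennreal ((f s)\<^sup>2)) \<partial>M)
      + (\<integral>\<^sup>+s. 2 * (indicator A s * ennreal ((f s - g s)\<^sup>2)) \<partial>M)"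
    by (rule nn_integral_add) measurable
  also have "\<dots> = 2 * (\<integral>\<^sup>+s. indicator A s * ennreal ((f s)\<^sup>2) \<partial>M) + 2 * (\<integral>\<^sup>+s. indicator A s * ennreal ((f s - g s)\<^sup>2) \<partial>M)"
    by (subst (1 2) nn_integral_cmult) measurable
  finally show ?thesis .
qed

lemma ennreal_set_integral_sq_eq_nn_integral:
  fixes f :: "real \<Rightarrow> real"
  assumes f: "(\<lambda>s. if s \<in> {0..T} then f s else 0) \<in> borel_measurable lborel"
    and bounded: "\<And>s. s \<in> {0..T} \<Longrightarrow> \<bar>f s\<bar> \<le> B" and T: "0 \<le> T"
  shows "ennreal (LINT s:{0..T}|lborel. (f s)\<^sup>2) = (\<integral>\<^sup>+s. indicator {0..T} s * ennreal ((f s)\<^sup>2) \<partial>lborel)"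
proof -
  define fe where "fe s = (if s \<in> {0..T} then f s else 0)" for s
  have ind: "indicator {0..T} s * ennreal ((f s)\<^sup>2) = ennreal ((fe s)\<^sup>2)" for s
    by (simp add: fe_def indicator_def)
  have "ennreal ((fe s)\<^sup>2) \<le> ennreal (B\<^sup>2) * indicator {0..T} s" for s
    using bounded[of s] abs_le_square_iff[of "f s" B] by (auto simp: fe_def indicator_def intro!: ennreal_leI)
  then have "(\<integral>\<^sup>+ s. ennreal ((fe s)\<^sup>2) \<partial>lborel) \<le> (\<integral>\<^sup>+ s. ennreal (B\<^sup>2) * indicator {0..T} s \<partial>lborel)"
    by (rule nn_integral_mono)
  also have "\<dots> = ennreal (B\<^sup>2) * ennreal T"
    using T by (simp add: nn_integral_cmult_indicator)
  finally have finite: "(\<integral>\<^sup>+ s. ennreal ((fe s)\<^sup>2) \<partial>lborel) \<noteq> \<top>"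
    by (auto simp: top_unique ennreal_mult_eq_top_iff)
  have "(LINT s:{0..T}|lborel. (f s)\<^sup>2) = integral\<^sup>L lborel (\<lambda>s. (fe s)\<^sup>2)"
    unfolding set_lebesgue_integral_def by (intro Bochner_Integration.integral_cong) (auto simp: fe_def)
  also have "\<dots> = enn2real (\<integral>\<^sup>+ s. ennreal ((fe s)\<^sup>2) \<partial>lborel)"
    using f by (intro integral_eq_nn_integral) (auto simp: fe_def)
  finally show ?thesis
    using finite by (simp add: ind ennreal_enn2real_if)
qed

lemma measurable_extend_by_zero_Icc:
  fixes g :: "real \<Rightarrow> 'x \<Rightarrow> real"
  assumes g: "(\<lambda>(u,x). g u x) \<in> borel_measurable (restrict_space borel {0..s} \<Otimes>\<^sub>M N)"
  shows "(\<lambda>(x,u). if u \<in> {0..s} then g u x else 0) \<in> borel_measurable (N \<Otimes>\<^sub>M lborel)"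
proof -
  let ?Om = "{z :: 'x \<times> real. snd z \<in> {0..s}}"
  have snd_meas: "(\<lambda>z. snd z) \<in> measurable (restrict_space (N \<Otimes>\<^sub>M lborel) ?Om) (restrict_space borel {0..s})"
  proof (rule measurable_restrict_space2)
    show "snd \<in> space (restrict_space (N \<Otimes>\<^sub>M lborel) ?Om) \<rightarrow> {0..s}"
      by (auto simp: space_restrict_space)
    have "snd \<in> measurable (N \<Otimes>\<^sub>M lborel) borel" using measurable_snd[of N lborel] by simp
    then show "snd \<in> measurable (restrict_space (N \<Otimes>\<^sub>M lborel) ?Om) borel"
      by (rule measurable_restrict_space1)
  qed
  have fst_meas: "(\<lambda>z. fst z) \<in> measurable (restrict_space (N \<Otimes>\<^sub>M lborel) ?Om) N"
    by (rule measurable_restrict_space1[OF measurable_fst])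
  have swap_meas: "(\<lambda>z. (snd z, fst z)) \<in> measurable (restrict_space (N \<Otimes>\<^sub>M lborel) ?Om) (restrict_space borel {0..s} \<Otimes>\<^sub>M N)"
    by (rule measurable_Pair[OF snd_meas fst_meas])
  have g_restricted: "(\<lambda>z. g (snd z) (fst z)) \<in> borel_measurable (restrict_space (N \<Otimes>\<^sub>M lborel) ?Om)"
    using measurable_compose[OF swap_meas g] by simp
  have extended: "(\<lambda>z. if snd z \<in> {0..s} then g (snd z) (fst z) else 0) \<in> borel_measurable (N \<Otimes>\<^sub>M lborel)"
    apply (rule measurable_If_restrict_space_iff[THEN iffD2])
    subgoal by measurable
    using g_restricted by simp
  have "(\<lambda>(x,u). if u \<in> {0..s} then g u x else 0) = (\<lambda>z. if snd z \<in> {0..s} then g (snd z) (fst z) else 0)"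
    by (auto simp: fun_eq_iff)
  then show ?thesis using extended by simp
qed

lemma borel_measurable_set_integral_Icc:
  fixes H :: "real \<Rightarrow> 'x \<Rightarrow> real"
  assumes H: "(\<lambda>(x, s). if s \<in> {0..T} then H s x else 0) \<in> borel_measurable (N \<Otimes>\<^sub>M lborel)"
  shows "(\<lambda>x. LINT u:{0..T}|lborel. H u x) \<in> borel_measurable N"
proof -
  define He where "He x s = (if s \<in> {0..T} then H s x else 0)" for x s
  have "(LINT u:{0..T}|lborel. H u x) = integral\<^sup>L lborel (He x)" for x
    unfolding set_lebesgue_integral_def He_def
    by (intro Bochner_Integration.integral_cong) (auto simp: indicator_def)
  moreover have "(\<lambda>(x, s). He x s) \<in> borel_measurable (N \<Otimes>\<^sub>M lborel)"
    using H by (simp add: He_def)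
  then have "(\<lambda>x. integral\<^sup>L lborel (He x)) \<in> borel_measurable N"
    by (rule lborel.borel_measurable_lebesgue_integral)
  ultimately show ?thesis by simp
qed

lemma borel_measurable_set_integral_sq:
  fixes H :: "real \<Rightarrow> 'x \<Rightarrow> real"
  assumes H: "(\<lambda>(x, s). if s \<in> {0..T} then H s x else 0) \<in> borel_measurable (N \<Otimes>\<^sub>M lborel)"
  shows "(\<lambda>x. LINT u:{0..T}|lborel. (H u x)\<^sup>2) \<in> borel_measurable N"
proof (rule borel_measurable_set_integral_Icc)
  have "(\<lambda>(x, s). (if s \<in> {0..T} then H s x else 0)\<^sup>2) \<in> borel_measurable (N \<Otimes>\<^sub>M lborel)"
    using H by (simp add: case_prod_beta) measurable
  moreover have "(\<lambda>(x, s). (if s \<in> {0..T} then H s x else 0)\<^sup>2) = (\<lambda>(x, s). if s \<in> {0..T} then (H s x)\<^sup>2 else 0)"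
    by (auto simp: fun_eq_iff)
  ultimately show "(\<lambda>(x, s). if s \<in> {0..T} then (H s x)\<^sup>2 else 0) \<in> borel_measurable (N \<Otimes>\<^sub>M lborel)"
    by simp
qed

context filtered_brownian_motion
begin

lemma simple_integrand_measurable:
  assumes si: "simple_integrand P F T m p \<xi>"
  shows "simple_stoch_int m p \<xi> W \<in> borel_measurable P"
    and "(\<lambda>(x, s). simple_process m p \<xi> s x) \<in> borel_measurable (P \<Otimes>\<^sub>M lborel)"
proof -
  have p0: "p 0 = 0" and pm: "p m = T" and pinc: "\<forall>i<m. p i < p (Suc i)"
    using si unfolding simple_integrand_def by auto
  have p_range: "0 \<le> p i \<and> p i \<le> T" if "i \<le> m" for i
    using partition_mono[OF pinc, of 0 i] partition_mono[OF pinc, of i m] p0 pm that by auto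
  have \<xi>: "\<xi> i \<in> borel_measurable P" if "i < m" for i
    using si that p_range[of i] unfolding simple_integrand_def by (auto intro: measurable_filtration)
  have W: "W (p i) \<in> borel_measurable P" if "i \<le> m" for i
    using measurable_filtration[OF adapted] p_range[OF that] by auto
  show "simple_stoch_int m p \<xi> W \<in> borel_measurable P"
    unfolding simple_stoch_int_def[abs_def] using \<xi> W by (intro borel_measurable_sum) auto
  have "(\<lambda>z. \<xi> i (fst z) * indicator {p i<..p (Suc i)} (snd z)) \<in> borel_measurable (P \<Otimes>\<^sub>M lborel)"
    if "i < m" for i
    using \<xi>[OF that] by measurable
  then show "(\<lambda>(x, s). simple_process m p \<xi> s x) \<in> borel_measurable (P \<Otimes>\<^sub>M lborel)"
    unfolding simple_process_def case_prod_beta by (intro borel_measurable_sum) auto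
qed

text \<open>Along an approximating sequence of simple integrands the stochastic exponentials have mean
  one, and the quadratic variation term of the limit dominates half of theirs up to the \<open>L\<^sup>2\<close>
  error; Fatou's lemma along an a.e. convergent subsequence gives the bound.\<close>

lemma nn_integral_exp_ito_integral_le_1:
  assumes ito: "is_ito_integral P F T W H Z" and T: "0 \<le> T"
    and H_bounded: "\<And>s x. s \<in> {0..T} \<Longrightarrow> x \<in> space P \<Longrightarrow> \<bar>H s x\<bar> \<le> B"
    and H_meas: "(\<lambda>(x, s). if s \<in> {0..T} then H s x else 0) \<in> borel_measurable (P \<Otimes>\<^sub>M lborel)"
  shows "(\<integral>\<^sup>+x. ennreal (exp (c * Z x - c\<^sup>2 * (LINT u:{0..T}|lborel. (H u x)\<^sup>2))) \<partial>P) \<le> 1"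
proof -
  obtain mm pp \<xi>\<xi> where Z: "Z \<in> borel_measurable P"
    and si: "\<And>n. simple_integrand P F T (mm n) (pp n) (\<xi>\<xi> n)"
    and H_approx: "(\<lambda>n. \<integral>\<^sup>+ \<omega>. (\<integral>\<^sup>+ s. indicator {0..T} s *
              ennreal ((H s \<omega> - simple_process (mm n) (pp n) (\<xi>\<xi> n) s \<omega>)\<^sup>2) \<partial>lborel) \<partial>P) \<longlonglongrightarrow> 0"
    and Z_approx: "(\<lambda>n. \<integral>\<^sup>+ \<omega>. ennreal ((Z \<omega> - simple_stoch_int (mm n) (pp n) (\<xi>\<xi> n) W \<omega>)\<^sup>2) \<partial>P) \<longlonglongrightarrow> 0"
    using ito unfolding is_ito_integral_def by blast
  define S where "S n s x = simple_process (mm n) (pp n) (\<xi>\<xi> n) s x" for n s x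
  define SI where "SI n x = simple_stoch_int (mm n) (pp n) (\<xi>\<xi> n) W x" for n x
  define I where "I n x = (\<integral>\<^sup>+ s. indicator {0..T} s * ennreal ((H s x - S n s x)\<^sup>2) \<partial>lborel)" for n x
  define K where "K n x = ennreal ((Z x - SI n x)\<^sup>2)" for n x
  define Q where "Q n x = (\<Sum>i<mm n. (\<xi>\<xi> n i x)\<^sup>2 * (pp n (Suc i) - pp n i))" for n x
  define J where "J x = (LINT u:{0..T}|lborel. (H u x)\<^sup>2)" for x
  define He where "He x s = (if s \<in> {0..T} then H s x else 0)" for x s
  have He: "(\<lambda>(x, s). He x s) \<in> borel_measurable (P \<Otimes>\<^sub>M lborel)"
    using H_meas by (simp add: He_def)
  have He_section: "He x \<in> borel_measurable lborel" if "x \<in> space P" for x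
    using measurable_Pair2[OF He that] by simp
  have SI: "SI n \<in> borel_measurable P" for n
    using simple_integrand_measurable(1)[OF si] by (simp add: SI_def[abs_def])
  have S: "(\<lambda>(x, s). S n s x) \<in> borel_measurable (P \<Otimes>\<^sub>M lborel)" for n
    using simple_integrand_measurable(2)[OF si] by (simp add: S_def)
  have I_eq: "I n x = (\<integral>\<^sup>+ s. indicator {0..T} s * ennreal ((He x s - S n s x)\<^sup>2) \<partial>lborel)" for n x
    unfolding I_def by (intro nn_integral_cong) (auto simp: He_def indicator_def)
  have I: "I n \<in> borel_measurable P" for n
  proof -
    have "(\<lambda>(x, s). indicator {0..T} s * ennreal ((He x s - S n s x)\<^sup>2)) \<in> borel_measurable (P \<Otimes>\<^sub>M lborel)"
      using He S[of n] by (simp add: case_prod_beta) measurable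
    from lborel.borel_measurable_nn_integral[OF this] show ?thesis by (simp add: I_eq[abs_def])
  qed
  have K: "K n \<in> borel_measurable P" for n
    using SI[of n] Z unfolding K_def[abs_def] by measurable
  have J: "J \<in> borel_measurable P"
    unfolding J_def[abs_def] by (rule borel_measurable_set_integral_sq[OF H_meas])
  have J_nn: "ennreal (J x) = (\<integral>\<^sup>+s. indicator {0..T} s * ennreal ((H s x)\<^sup>2) \<partial>lborel)" "0 \<le> J x"
    if x: "x \<in> space P" for x
  proof -
    show "ennreal (J x) = (\<integral>\<^sup>+s. indicator {0..T} s * ennreal ((H s x)\<^sup>2) \<partial>lborel)"
      unfolding J_def using He_section[OF x] H_bounded[OF _ x] T
      by (intro ennreal_set_integral_sq_eq_nn_integral) (auto simp: He_def[abs_def])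
    show "0 \<le> J x" unfolding J_def set_lebesgue_integral_def
      by (intro Bochner_Integration.integral_nonneg) (simp add: indicator_def)
  qed
  have Q_le: "Q n x \<le> 2 * J x + 2 * enn2real (I n x)" if x: "x \<in> space P" and fin: "I n x \<noteq> \<top>" for n x
  proof -
    have S_section: "(\<lambda>s. S n s x) \<in> borel_measurable lborel"
      using measurable_Pair2[OF S[of n] x] by simp
    have "ennreal (Q n x) = (\<integral>\<^sup>+s. indicator {0..T} s * ennreal ((S n s x)\<^sup>2) \<partial>lborel)"
      unfolding Q_def S_def using si[of n]
      by (intro simple_process_sq_integral[symmetric]) (auto simp: simple_integrand_def)
    also have "\<dots> \<le> 2 * (\<integral>\<^sup>+s. indicator {0..T} s * ennreal ((He x s)\<^sup>2) \<partial>lborel)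
        + 2 * (\<integral>\<^sup>+s. indicator {0..T} s * ennreal ((He x s - S n s x)\<^sup>2) \<partial>lborel)"
      using He_section[OF x] S_section by (intro nn_integral_indicator_sq_le) auto
    also have "(\<integral>\<^sup>+s. indicator {0..T} s * ennreal ((He x s)\<^sup>2) \<partial>lborel) = ennreal (J x)"
      unfolding J_nn[OF x] by (intro nn_integral_cong) (simp add: He_def indicator_def)
    also have "2 * ennreal (J x) + 2 * (\<integral>\<^sup>+s. indicator {0..T} s * ennreal ((He x s - S n s x)\<^sup>2) \<partial>lborel)
        = ennreal (2 * J x + 2 * enn2real (I n x))"
      using fin J_nn[OF x] by (simp add: I_eq[symmetric] ennreal_plus ennreal_mult' ennreal_enn2real_if)
    finally show ?thesis
      using J_nn(2)[OF x] by (subst (asm) ennreal_le_iff) auto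
  qed
  define d where "d n x = (if I n x = \<top> then 0
      else exp (c * SI n x - c\<^sup>2/2 * (2 * J x + 2 * enn2real (I n x))))" for n x
  have d: "(\<lambda>x. ennreal (d n x)) \<in> borel_measurable P" for n
    using I[of n] SI[of n] J unfolding d_def by measurable
  have d_le: "(\<integral>\<^sup>+x. ennreal (d n x) \<partial>P) \<le> 1" for n
  proof -
    have "(\<integral>\<^sup>+x. ennreal (d n x) \<partial>P) \<le> (\<integral>\<^sup>+x. ennreal (exp (c * SI n x - c\<^sup>2/2 * Q n x)) \<partial>P)"
      using Q_le by (intro nn_integral_mono) (auto simp: d_def intro!: mult_left_mono)
    also have "\<dots> = 1"
      unfolding SI_def Q_def by (rule nn_integral_exp_simple_stoch_int[OF si])
    finally show ?thesis .
  qed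
  have "(\<lambda>n. (\<integral>\<^sup>+x. I n x \<partial>P) + (\<integral>\<^sup>+x. K n x \<partial>P)) \<longlonglongrightarrow> 0 + 0"
    using H_approx Z_approx unfolding I_def K_def S_def SI_def by (intro tendsto_add)
  then have "(\<lambda>n. \<integral>\<^sup>+x. I n x + K n x \<partial>P) \<longlonglongrightarrow> 0"
    using I K by (simp add: nn_integral_add)
  moreover have "(\<lambda>x. I n x + K n x) \<in> borel_measurable P" for n
    using I K by (intro borel_measurable_add)
  ultimately obtain r where "strict_mono r" and r: "AE x in P. (\<lambda>j. I (r j) x + K (r j) x) \<longlonglongrightarrow> 0"
    using AE_subseq_tendsto_0_of_nn_integral_tendsto_0[of "\<lambda>n x. I n x + K n x" P] by blast
  have "AE x in P. (\<lambda>j. ennreal (d (r j) x)) \<longlonglongrightarrow> ennreal (exp (c * Z x - c\<^sup>2 * J x))"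
    using r
  proof eventually_elim
    case (elim x)
    have I_lim: "(\<lambda>j. I (r j) x) \<longlonglongrightarrow> 0" and K_lim: "(\<lambda>j. K (r j) x) \<longlonglongrightarrow> 0"
      by (auto intro: tendsto_sandwich[OF _ _ tendsto_const elim])
    have "eventually (\<lambda>j. I (r j) x \<noteq> \<top>) sequentially"
      using order_tendstoD(2)[OF I_lim, of \<top>] by (auto elim: eventually_mono)
    moreover have "(\<lambda>j. exp (c * SI (r j) x - c\<^sup>2/2 * (2 * J x + 2 * enn2real (I (r j) x))))
        \<longlonglongrightarrow> exp (c * Z x - c\<^sup>2/2 * (2 * J x + 2 * enn2real 0))"
      using K_lim I_lim unfolding K_def
      by (intro tendsto_intros tendsto_of_ennreal_sq_diff_tendsto_0 tendsto_enn2real) auto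
    ultimately have "(\<lambda>j. d (r j) x) \<longlonglongrightarrow> exp (c * Z x - c\<^sup>2 * J x)"
      by (auto simp: d_def elim: Lim_transform_eventually eventually_mono)
    then show ?case by (rule tendsto_ennrealI)
  qed
  from nn_integral_le_of_AE_tendsto[of "\<lambda>j x. ennreal (d (r j) x)", OF d this d_le]
  show ?thesis unfolding J_def .
qed

end

section \<open>Independent increments and the natural filtration\<close>

lemma partition_through_points:
  fixes J :: "real set" and p q :: real
  assumes J: "finite J" "J \<subseteq> {0..p}" and pq: "0 \<le> p" "p < q"
  shows "\<exists>k r. r 0 = 0 \<and> r k = p \<and> r (Suc k) = q \<and> (\<forall>i<Suc k. r i < r (Suc i)) \<and> (\<forall>j\<in>J. \<exists>i\<le>k. r i = j)"
proof -
  define S where "S = insert p J - {0}"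
  define L where "L = sorted_list_of_set S"
  define k where "k = length L"
  define r where "r i = (0 # L @ [q]) ! i" for i
  have finS: "finite S" using J by (simp add: S_def)
  have setL: "set L = S" using finS by (simp add: L_def)
  have sw: "sorted_wrt (<) L" by (simp add: L_def strict_sorted_list_of_set)
  have Lrange: "0 < L ! i \<and> L ! i \<le> p" if "i < k" for i
  proof -
    have "L ! i \<in> S" using that setL nth_mem k_def by metis
    then show ?thesis using J pq unfolding S_def by auto
  qed
  have r0: "r 0 = 0" by (simp add: r_def)
  have rSk: "r (Suc k) = q" by (simp add: r_def k_def nth_append)
  have rS: "r (Suc i) = L ! i" if "i < k" for i using that by (simp add: r_def k_def nth_append)
  have mono: "\<forall>i<Suc k. r i < r (Suc i)"
  proof (intro allI impI)
    fix i assume i: "i < Suc k"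
    show "r i < r (Suc i)"
    proof (cases i)
      case 0
      show ?thesis
      proof (cases "k = 0")
        case True then show ?thesis using 0 r0 rSk pq by simp
      next
        case False then show ?thesis using 0 r0 rS[of 0] Lrange[of 0] by simp
      qed
    next
      case (Suc i')
      then have i': "i' < k" using i by simp
      show ?thesis
      proof (cases "Suc i' < k")
        case True
        then show ?thesis using Suc rS[OF i'] rS[OF True] sorted_wrt_nth_less[OF sw, of i' "Suc i'"] k_def by simp
      next
        case False
        then have "Suc i' = k" using i' by simp
        then show ?thesis using Suc rS[OF i'] rSk Lrange[OF i'] pq by simp
      qed
    qed
  qed
  have rk: "r k = p"
  proof (cases "k = 0")
    case True
    then have "S = {}" using setL k_def by auto
    then have "p = 0" unfolding S_def by auto
    then show ?thesis using True r0 by simp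
  next
    case False
    then have "p \<noteq> 0"
    proof -
      have "S \<noteq> {}" using False setL k_def by auto
      then show ?thesis using J unfolding S_def by auto
    qed
    then have "p \<in> set L" using setL S_def by auto
    then obtain i0 where i0: "i0 < k" "L ! i0 = p" by (metis in_set_conv_nth k_def)
    have "L ! (k - 1) = p"
    proof (rule ccontr)
      assume ne: "L ! (k - 1) \<noteq> p"
      then have "i0 < k - 1" using i0 by (cases "i0 = k - 1") auto
      then have "L ! i0 < L ! (k - 1)" using sorted_wrt_nth_less[OF sw, of i0 "k - 1"] False k_def by simp
      then show False using i0 Lrange[of "k - 1"] False by simp
    qed
    then show ?thesis using rS[of "k - 1"] False by simp
  qed
  have cover: "\<forall>j\<in>J. \<exists>i\<le>k. r i = j"
  proof
    fix j assume j: "j \<in> J"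
    show "\<exists>i\<le>k. r i = j"
    proof (cases "j = 0")
      case True then show ?thesis using r0 by (intro exI[of _ 0]) simp
    next
      case False
      then have "j \<in> set L" using setL S_def j by auto
      then obtain i' where "i' < k" "L ! i' = j" by (metis in_set_conv_nth k_def)
      then show ?thesis using rS by (intro exI[of _ "Suc i'"]) auto
    qed
  qed
  show ?thesis using r0 rk rSk mono cover by blast
qed

lemma (in prob_space) indep_vars_prob_Int_last:
  fixes X :: "nat \<Rightarrow> 'a \<Rightarrow> real"
  assumes iv: "indep_vars (\<lambda>_. borel) X {..<Suc k}"
    and A: "A \<in> sigma_sets (space M) (\<Union>i<k. {X i -` B \<inter> space M | B. B \<in> sets (borel :: real measure)})"
    and C: "C \<in> sets borel"
  shows "prob (A \<inter> (X k -` C \<inter> space M)) = prob A * prob (X k -` C \<inter> space M)"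
proof -
  define E where "E i = {X i -` B \<inter> space M | B. B \<in> sets (borel :: real measure)}" for i
  define I where "I b = (if b then {..<k} else {k})" for b
  have stable: "Int_stable (E i)" for i
  proof (unfold E_def, safe intro!: Int_stableI)
    fix A B assume "A \<in> sets (borel :: real measure)" "B \<in> sets (borel :: real measure)"
    then show "\<exists>C. (X i -` A \<inter> space M) \<inter> (X i -` B \<inter> space M) = (X i -` C \<inter> space M) \<and> C \<in> sets borel"
      by (intro exI[of _ "A \<inter> B"]) auto
  qed
  have indep_E: "indep_sets E {..<Suc k}"
    using iv unfolding indep_vars_def2 E_def by auto
  have I_cover: "(\<Union>b\<in>UNIV. I b) = {..<Suc k}" by (auto simp: I_def)
  have indep: "indep_sets (\<lambda>b. sigma_sets (space M) (\<Union>i\<in>I b. E i)) UNIV"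
    by (rule indep_sets_collect_sigma) (use indep_E I_cover stable in \<open>auto simp: disjoint_family_on_def I_def\<close>)
  have A_past: "A \<in> sigma_sets (space M) (\<Union>i\<in>I True. E i)"
    using A by (simp add: I_def E_def)
  have C_last: "X k -` C \<inter> space M \<in> sigma_sets (space M) (\<Union>i\<in>I False. E i)"
    using C by (auto simp: I_def E_def intro!: sigma_sets.Basic)
  have "prob (\<Inter>b\<in>UNIV. case_bool A (X k -` C \<inter> space M) b)
      = (\<Prod>b\<in>UNIV. prob (case_bool A (X k -` C \<inter> space M) b))"
    by (rule indep_setsD[OF indep]) (use A_past C_last in \<open>auto split: bool.split\<close>)
  then show ?thesis by (simp add: UNIV_bool Int_commute)
qed

text \<open>Refining the time grid through the finitely many observation times, the event is
  determined by the increments before \<open>p\<close>, which are independent of \<open>w q - w p\<close>.\<close>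

lemma brownian_motion_indep_increment_cylinder:
  fixes M :: "'w measure" and w :: "real \<Rightarrow> 'w \<Rightarrow> real"
  assumes BM: "brownian_motion M t w"
    and J: "finite J" "J \<subseteq> {0..p}" and B: "\<And>j. j \<in> J \<Longrightarrow> B j \<in> sets borel"
    and pq: "0 \<le> p" "p < q" "q \<le> t" and C: "C \<in> sets borel"
  shows "measure M ({\<omega>\<in>space M. \<forall>j\<in>J. w j \<omega> \<in> B j} \<inter> ((\<lambda>\<omega>. w q \<omega> - w p \<omega>) -` C \<inter> space M))
    = measure M {\<omega>\<in>space M. \<forall>j\<in>J. w j \<omega> \<in> B j} * measure M ((\<lambda>\<omega>. w q \<omega> - w p \<omega>) -` C \<inter> space M)"
proof -
  have "prob_space M" and w0: "\<And>\<omega>. \<omega> \<in> space M \<Longrightarrow> w 0 \<omega> = 0"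
    and indep_increments: "\<And>m r. r 0 \<ge> 0 \<Longrightarrow> r m \<le> t \<Longrightarrow> (\<forall>i<m. r i < r (Suc i)) \<Longrightarrow>
        prob_space.indep_vars M (\<lambda>_. borel) (\<lambda>i \<omega>. w (r (Suc i)) \<omega> - w (r i) \<omega>) {..<m}"
    using BM unfolding brownian_motion_def by auto
  interpret prob_space M by fact
  obtain k r where r0: "r 0 = 0" and rk: "r k = p" and rSk: "r (Suc k) = q"
    and mono: "\<forall>i<Suc k. r i < r (Suc i)" and cover: "\<forall>j\<in>J. \<exists>i\<le>k. r i = j"
    using partition_through_points[OF J pq(1,2)] by blast
  define X where "X i \<omega> = w (r (Suc i)) \<omega> - w (r i) \<omega>" for i \<omega>
  have iv: "indep_vars (\<lambda>_. borel) X {..<Suc k}"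
    unfolding X_def by (rule indep_increments) (use r0 rSk pq mono in auto)
  have telescope: "w (r i) \<omega> = (\<Sum>l<i. X l \<omega>)" if "\<omega> \<in> space M" for i \<omega>
  proof (induction i)
    case 0 then show ?case using r0 w0[OF that] by simp
  next
    case (Suc i) then show ?case by (simp add: X_def)
  qed
  define E where "E i = {X i -` A \<inter> space M | A. A \<in> sets (borel :: real measure)}" for i
  define a where "a = {\<omega>\<in>space M. \<forall>j\<in>J. w j \<omega> \<in> B j}"
  define Past where "Past = sigma (space M) (\<Union>i\<in>{..<k}. E i)"
  have E_Pow: "(\<Union>i\<in>{..<k}. E i) \<subseteq> Pow (space M)" by (auto simp: E_def)
  have space_Past: "space Past = space M" using E_Pow by (simp add: Past_def)
  have sets_Past: "sets Past = sigma_sets (space M) (\<Union>i\<in>{..<k}. E i)" using E_Pow by (simp add: Past_def)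
  have X_Past: "X l \<in> borel_measurable Past" if "l < k" for l
  proof (rule borel_measurableI)
    fix S :: "real set" assume "open S"
    then have "S \<in> sets (borel :: real measure)" by simp
    then have "X l -` S \<inter> space M \<in> E l" unfolding E_def by blast
    then show "X l -` S \<inter> space Past \<in> sets Past" using that space_Past sets_Past by auto
  qed
  have w_Past: "w j \<in> borel_measurable Past" if "j \<in> J" for j
  proof -
    have "\<exists>i\<le>k. r i = j" using cover that by simp
    then obtain i where i: "i \<le> k" "r i = j" by blast
    have "(\<lambda>\<omega>. \<Sum>l<i. X l \<omega>) \<in> borel_measurable Past"
      by (rule borel_measurable_sum) (use X_Past i in auto)
    moreover have eq: "w j \<omega> = (\<Sum>l<i. X l \<omega>)" if "\<omega> \<in> space Past" for \<omega>
    proof -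
      have "\<omega> \<in> space M" using that space_Past by simp
      from telescope[OF this, of i] show ?thesis using i(2) by simp
    qed
    moreover have "w j \<in> borel_measurable Past \<longleftrightarrow> (\<lambda>\<omega>. \<Sum>l<i. X l \<omega>) \<in> borel_measurable Past"
      by (rule measurable_cong) (rule eq)
    ultimately show ?thesis by simp
  qed
  have a_Past: "a \<in> sets Past"
  proof -
    have "{\<omega>\<in>space Past. \<forall>j\<in>J. w j \<omega> \<in> B j} \<in> sets Past"
    proof (rule sets.sets_Collect_finite_All[OF _ J(1)])
      fix j assume "j \<in> J"
      then have "w j -` B j \<inter> space Past \<in> sets Past" using measurable_sets[OF w_Past B] by auto
      then show "{\<omega> \<in> space Past. w j \<omega> \<in> B j} \<in> sets Past" by (simp add: vimage_def Int_def conj_commute)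
    qed
    then show ?thesis using space_Past by (simp add: a_def)
  qed
  have last: "X k -` C \<inter> space M = (\<lambda>\<omega>. w q \<omega> - w p \<omega>) -` C \<inter> space M"
    using rk rSk by (auto simp: X_def)
  have "a \<in> sigma_sets (space M) (\<Union>i<k. {X i -` B \<inter> space M | B. B \<in> sets (borel :: real measure)})"
    using a_Past sets_Past by (simp add: E_def)
  from indep_vars_prob_Int_last[OF iv this C]
  show ?thesis unfolding a_def last .
qed

definition natural_filtration :: "'w measure \<Rightarrow> (real \<Rightarrow> 'w \<Rightarrow> real) \<Rightarrow> real \<Rightarrow> 'w measure" where
  "natural_filtration M w s = sigma (space M) {w u -` B \<inter> space M | u B. u \<in> {0..s} \<and> B \<in> sets (borel :: real measure)}"

lemma natural_filtration_space[simp]: "space (natural_filtration M w s) = space M"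
  unfolding natural_filtration_def by (rule space_measure_of) auto

lemma sets_natural_filtration: "sets (natural_filtration M w s) = sigma_sets (space M) {w u -` B \<inter> space M | u B. u \<in> {0..s} \<and> B \<in> sets (borel :: real measure)}"
  unfolding natural_filtration_def by (rule sets_measure_of) auto

lemma sets_natural_filtration_mono: "s \<le> s' \<Longrightarrow> sets (natural_filtration M w s) \<subseteq> sets (natural_filtration M w s')"
  unfolding sets_natural_filtration
proof (rule sigma_sets_mono', safe)
  fix u B assume "s \<le> s'" "u \<in> {0..s}" "B \<in> sets (borel :: real measure)"
  then show "\<exists>ua Ba. w u -` B \<inter> space M = w ua -` Ba \<inter> space M \<and> ua \<in> {0..s'} \<and> Ba \<in> sets (borel :: real measure)"
    by (intro exI[of _ u] exI[of _ B]) auto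
qed

lemma measurable_natural_filtration: "u \<in> {0..s} \<Longrightarrow> w u \<in> borel_measurable (natural_filtration M w s)"
proof (rule borel_measurableI)
  fix S :: "real set" assume "open S" "u \<in> {0..s}"
  then have "w u -` S \<inter> space M \<in> {w u -` B \<inter> space M | u B. u \<in> {0..s} \<and> B \<in> sets (borel :: real measure)}"
    by (intro CollectI exI[of _ u] exI[of _ S]) auto
  then show "w u -` S \<inter> space (natural_filtration M w s) \<in> sets (natural_filtration M w s)"
    unfolding sets_natural_filtration by (auto intro: sigma_sets.Basic)
qed

lemma sets_natural_filtration_subset:
  assumes "\<And>u. u \<in> {0..s} \<Longrightarrow> w u \<in> borel_measurable M"
  shows "sets (natural_filtration M w s) \<subseteq> sets M"
  unfolding sets_natural_filtration by (rule sets.sigma_sets_subset) (use assms in \<open>auto intro: measurable_sets\<close>)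

definition cylinders :: "'w measure \<Rightarrow> (real \<Rightarrow> 'w \<Rightarrow> real) \<Rightarrow> real \<Rightarrow> 'w set set" where
  "cylinders M w p = {{\<omega>\<in>space M. \<forall>j\<in>J. w j \<omega> \<in> B j} | J B.
     finite J \<and> J \<subseteq> {0..p} \<and> (\<forall>j\<in>J. B j \<in> sets (borel :: real measure))}"

lemma Int_stable_cylinders: "Int_stable (cylinders M w p)"
proof (rule Int_stableI)
  fix S1 S2 assume "S1 \<in> cylinders M w p" "S2 \<in> cylinders M w p"
  then obtain J1 B1 J2 B2 where S1: "S1 = {\<omega>\<in>space M. \<forall>j\<in>J1. w j \<omega> \<in> B1 j}" "finite J1" "J1 \<subseteq> {0..p}"
    "\<forall>j\<in>J1. B1 j \<in> sets (borel :: real measure)"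
    and S2: "S2 = {\<omega>\<in>space M. \<forall>j\<in>J2. w j \<omega> \<in> B2 j}" "finite J2" "J2 \<subseteq> {0..p}"
    "\<forall>j\<in>J2. B2 j \<in> sets (borel :: real measure)" unfolding cylinders_def by auto
  define B where "B j = (if j \<in> J1 then B1 j else UNIV) \<inter> (if j \<in> J2 then B2 j else UNIV)" for j
  have "S1 \<inter> S2 = {\<omega>\<in>space M. \<forall>j\<in>J1 \<union> J2. w j \<omega> \<in> B j}"
    unfolding S1(1) S2(1) B_def by auto
  moreover have "\<forall>j\<in>J1 \<union> J2. B j \<in> sets (borel :: real measure)" using S1(4) S2(4) by (auto simp: B_def)
  ultimately show "S1 \<inter> S2 \<in> cylinders M w p" unfolding cylinders_def using S1(2,3) S2(2,3)
    by (intro CollectI exI[of _ "J1 \<union> J2"] exI[of _ B] conjI) auto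
qed

lemma cylinders_subset_sets:
  assumes w: "\<And>u. u \<in> {0..p} \<Longrightarrow> w u \<in> borel_measurable M"
  shows "cylinders M w p \<subseteq> sets M"
proof
  fix S assume "S \<in> cylinders M w p"
  then obtain J B where S: "S = {\<omega>\<in>space M. \<forall>j\<in>J. w j \<omega> \<in> B j}" "finite J" "J \<subseteq> {0..p}"
    "\<forall>j\<in>J. B j \<in> sets (borel :: real measure)" unfolding cylinders_def by auto
  show "S \<in> sets M" unfolding S(1)
  proof (rule sets.sets_Collect_finite_All[OF _ S(2)])
    fix j assume j: "j \<in> J"
    have "w j -` B j \<inter> space M \<in> sets M" using measurable_sets[OF w S(4)[rule_format, OF j]] S(3) j by auto
    then show "{\<omega> \<in> space M. w j \<omega> \<in> B j} \<in> sets M" by (simp add: vimage_def Int_def conj_commute)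
  qed
qed

lemma sets_natural_filtration_subset_cylinders:
  "sets (natural_filtration M w p) \<subseteq> sigma_sets (space M) (cylinders M w p)"
proof -
  have "{w u -` B \<inter> space M | u B. u \<in> {0..p} \<and> B \<in> sets (borel :: real measure)} \<subseteq> cylinders M w p"
  proof safe
    fix u B assume uB: "u \<in> {0..p}" "B \<in> sets (borel :: real measure)"
    have "w u -` B \<inter> space M = {\<omega>\<in>space M. \<forall>j\<in>{u}. w j \<omega> \<in> (\<lambda>_. B) j}" by auto
    then show "w u -` B \<inter> space M \<in> cylinders M w p" unfolding cylinders_def using uB
      by (intro CollectI exI[of _ "{u}"] exI[of _ "\<lambda>_. B"] conjI) auto
  qed
  then show ?thesis unfolding sets_natural_filtration by (rule sigma_sets_mono')
qed

lemma brownian_motion_indep_natural_filtration: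
  fixes M :: "'w measure" and w :: "real \<Rightarrow> 'w \<Rightarrow> real"
  assumes BM: "brownian_motion M t w"
    and pq: "0 \<le> p" "p < q" "q \<le> t" and A: "A \<in> sets (natural_filtration M w p)" and C: "C \<in> sets borel"
  shows "measure M (A \<inter> ((\<lambda>\<omega>. w q \<omega> - w p \<omega>) -` C \<inter> space M))
    = measure M A * measure M ((\<lambda>\<omega>. w q \<omega> - w p \<omega>) -` C \<inter> space M)"
proof -
  have "prob_space M" and w: "\<And>s. s \<in> {0..t} \<Longrightarrow> w s \<in> borel_measurable M"
    using BM unfolding brownian_motion_def by auto
  interpret prob_space M by fact
  define D where "D = {(\<lambda>\<omega>. w q \<omega> - w p \<omega>) -` C' \<inter> space M | C'. C' \<in> sets (borel :: real measure)}"
  have "(\<lambda>\<omega>. w q \<omega> - w p \<omega>) \<in> borel_measurable M" using w pq by auto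
  then have D_events: "D \<subseteq> events" unfolding D_def by (auto intro: measurable_sets)
  have cylinders_events: "cylinders M w p \<subseteq> events"
    by (rule cylinders_subset_sets) (use w pq in auto)
  have "indep_set (cylinders M w p) D"
    unfolding indep_sets2_eq
  proof (intro conjI ballI cylinders_events D_events)
    fix S T assume "S \<in> cylinders M w p" "T \<in> D"
    then obtain J B C' where S: "S = {\<omega>\<in>space M. \<forall>j\<in>J. w j \<omega> \<in> B j}" "finite J" "J \<subseteq> {0..p}"
      "\<forall>j\<in>J. B j \<in> sets (borel :: real measure)" and T: "T = (\<lambda>\<omega>. w q \<omega> - w p \<omega>) -` C' \<inter> space M"
      "C' \<in> sets (borel :: real measure)" unfolding cylinders_def D_def by auto
    show "prob (S \<inter> T) = prob S * prob T"
      unfolding S(1) T(1) by (rule brownian_motion_indep_increment_cylinder[OF BM S(2,3) _ pq T(2)]) (use S(4) in auto)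
  qed
  moreover have "Int_stable D"
  proof (unfold D_def, safe intro!: Int_stableI)
    fix A B assume "A \<in> sets (borel :: real measure)" "B \<in> sets (borel :: real measure)"
    then show "\<exists>C. ((\<lambda>\<omega>. w q \<omega> - w p \<omega>) -` A \<inter> space M) \<inter> ((\<lambda>\<omega>. w q \<omega> - w p \<omega>) -` B \<inter> space M)
       = ((\<lambda>\<omega>. w q \<omega> - w p \<omega>) -` C \<inter> space M) \<and> C \<in> sets borel"
      by (intro exI[of _ "A \<inter> B"]) auto
  qed
  ultimately have "indep_set (sigma_sets (space M) (cylinders M w p)) (sigma_sets (space M) D)"
    by (rule indep_set_sigma_sets[OF _ Int_stable_cylinders])
  then have "\<forall>a\<in>sigma_sets (space M) (cylinders M w p). \<forall>b\<in>sigma_sets (space M) D. prob (a \<inter> b) = prob a * prob b"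
    unfolding indep_sets2_eq by simp
  moreover have "A \<in> sigma_sets (space M) (cylinders M w p)"
    using A sets_natural_filtration_subset_cylinders by blast
  moreover have "(\<lambda>\<omega>. w q \<omega> - w p \<omega>) -` C \<inter> space M \<in> sigma_sets (space M) D"
    using C unfolding D_def by (auto intro!: sigma_sets.Basic)
  ultimately show ?thesis by simp
qed

lemma brownian_motion_increment_normal:
  assumes BM: "brownian_motion M t w" and pq: "0 \<le> p" "p < q" "q \<le> t"
  shows "distr M lborel (\<lambda>\<omega>. w q \<omega> - w p \<omega>)
    = density lborel (\<lambda>y. ennreal (normal_density 0 (sqrt (q - p)) y))"
proof -
  define r where "r i = (if i = 0 then p else q)" for i :: nat
  have "0 \<le> r 0 \<and> r (Suc 0) \<le> t \<and> (\<forall>i<Suc 0. r i < r (Suc i))"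
    using pq by (simp add: r_def)
  then have "distributed M lborel (\<lambda>\<omega>. w (r (Suc 0)) \<omega> - w (r 0) \<omega>)
      (\<lambda>y. ennreal (normal_density 0 (sqrt (r (Suc 0) - r 0)) y))"
    using BM unfolding brownian_motion_def by blast
  then show ?thesis by (simp add: r_def distributed_def)
qed

lemma Bsig_generators_subset: "{{x \<in> Cpath t. x u \<in> A} | u A. u \<in> {0..s} \<and> A \<in> sets (borel :: real measure)} \<subseteq> Pow (Cpath t)"
  by auto

lemma space_Bsig[simp]: "space (Bsig t s) = Cpath t"
  unfolding Bsig_def by (rule space_measure_of) auto

lemma sets_Bsig: "sets (Bsig t s) = sigma_sets (Cpath t) {{x \<in> Cpath t. x u \<in> A} | u A. u \<in> {0..s} \<and> A \<in> sets (borel :: real measure)}"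
  unfolding Bsig_def by (rule sets_measure_of) auto

lemma sets_Bsig_mono: "s \<le> s' \<Longrightarrow> sets (Bsig t s) \<subseteq> sets (Bsig t s')"
  unfolding sets_Bsig
proof (rule sigma_sets_mono', safe)
  fix u A assume "s \<le> s'" "u \<in> {0..s}" "A \<in> sets (borel :: real measure)"
  then show "\<exists>ua Aa. {x \<in> Cpath t. x u \<in> A} = {x \<in> Cpath t. x ua \<in> Aa} \<and> ua \<in> {0..s'} \<and> Aa \<in> sets (borel :: real measure)"
    by (intro exI[of _ u] exI[of _ A]) auto
qed

lemma measurable_coordinate_Bsig: "u \<in> {0..s} \<Longrightarrow> (\<lambda>x. x u) \<in> borel_measurable (Bsig t s)"
proof (rule borel_measurableI)
  fix S :: "real set" assume "open S" "u \<in> {0..s}"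
  then have "{x \<in> Cpath t. x u \<in> S} \<in> {{x \<in> Cpath t. x u \<in> A} | u A. u \<in> {0..s} \<and> A \<in> sets (borel :: real measure)}"
    by (intro CollectI exI[of _ u] exI[of _ S]) auto
  moreover have "(\<lambda>x. x u) -` S \<inter> space (Bsig t s) = {x \<in> Cpath t. x u \<in> S}" by auto
  ultimately show "(\<lambda>x. x u) -` S \<inter> space (Bsig t s) \<in> sets (Bsig t s)"
    unfolding sets_Bsig by (auto intro: sigma_sets.Basic)
qed

lemma restr_path_eq[simp]: "u \<in> {0..t} \<Longrightarrow> restr_path t f u = f u"
  by (simp add: restr_path_def)

lemma restr_path_in_Cpath: "continuous_on {0..t} f \<Longrightarrow> restr_path t f \<in> Cpath t"
  unfolding Cpath_def
proof (intro CollectI conjI allI impI)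
  assume "continuous_on {0..t} f"
  then show "continuous_on {0..t} (restr_path t f)"
    by (rule continuous_on_cong[THEN iffD1, rotated 2]) auto
next
  fix u assume u: "u \<notin> {0..t}" show "restr_path t f u = 0" unfolding restr_path_def by (rule if_not_P[OF u])
qed

lemma Cpath_continuous_on: "x \<in> Cpath t \<Longrightarrow> continuous_on {0..t} x" by (simp add: Cpath_def)

lemma measurable_Bsig:
  assumes "\<And>\<omega>. \<omega> \<in> space G \<Longrightarrow> R \<omega> \<in> Cpath t"
    and "\<And>u. u \<in> {0..s} \<Longrightarrow> (\<lambda>\<omega>. R \<omega> u) \<in> borel_measurable G"
  shows "R \<in> measurable G (Bsig t s)"
proof (rule measurable_sigma_sets[OF sets_Bsig Bsig_generators_subset])
  show "R \<in> space G \<rightarrow> Cpath t" using assms(1) by auto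
  fix y assume "y \<in> {{x \<in> Cpath t. x u \<in> A} | u A. u \<in> {0..s} \<and> A \<in> sets (borel :: real measure)}"
  then obtain u A where y: "y = {x \<in> Cpath t. x u \<in> A}" "u \<in> {0..s}" "A \<in> sets (borel :: real measure)"
    by auto
  have "R -` y \<inter> space G = (\<lambda>\<omega>. R \<omega> u) -` A \<inter> space G"
    using assms(1) by (auto simp: y(1))
  also have "\<dots> \<in> sets G" using measurable_sets[OF assms(2)[OF y(2)] y(3)] .
  finally show "R -` y \<inter> space G \<in> sets G" .
qed

lemma continuous_on_Icc_abs_bounded:
  fixes f :: "real \<Rightarrow> real"
  assumes "continuous_on {a..b} f"
  shows "\<exists>B. \<forall>u\<in>{a..b}. \<bar>f u\<bar> \<le> B"
proof -
  have "compact (f ` {a..b})" by (rule compact_continuous_image[OF assms compact_Icc])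
  then have "bounded (f ` {a..b})" by (rule compact_imp_bounded)
  then obtain B where "\<forall>y\<in>f ` {a..b}. norm y \<le> B" by (auto simp: bounded_iff)
  then show ?thesis by auto
qed

lemma set_integrable_and_continuous_primitive:
  fixes g :: "real \<Rightarrow> real"
  assumes gm: "g \<in> borel_measurable (restrict_space borel {0..t})"
    and gb: "\<And>u. u \<in> {0..t} \<Longrightarrow> \<bar>g u\<bar> \<le> C"
  shows "\<And>s. s \<in> {0..t} \<Longrightarrow> set_integrable lborel {0..s} g"
    and "continuous_on {0..t} (\<lambda>s. LINT u:{0..s}|lborel. g u)"
proof -
  define g' where "g' u = (if u \<in> {0..t} then g u else 0)" for u
  have g'm: "g' \<in> borel_measurable borel"
    using measurable_restrict_space_iff[of "{0..t}" borel 0 borel g] gm unfolding g'_def by simp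
  have g'i: "set_integrable lborel {0..b} g'" for b
  proof (rule set_integrable_bound)
    show "set_integrable lborel {0..b} (\<lambda>_. C)"
      by (rule borel_integrable_atLeastAtMost') (rule continuous_on_const)
    show "set_borel_measurable lborel {0..b} g'"
      unfolding set_borel_measurable_def using g'm by measurable
    show "AE x in lborel. x \<in> {0..b} \<longrightarrow> norm (g' x) \<le> norm C"
    proof (rule AE_I2, intro impI)
      fix x
      show "norm (g' x) \<le> norm C"
      proof (cases "x \<in> {0..t}")
        case True then show ?thesis using gb[OF True] by (simp add: g'_def)
      qed (auto simp: g'_def)
    qed
  qed
  have eqi: "indicator {0..s} x *\<^sub>R g x = indicator {0..s} x *\<^sub>R g' x" if "s \<in> {0..t}" for s x
    using that by (auto simp: g'_def indicator_def)
  show si: "set_integrable lborel {0..s} g" if "s \<in> {0..t}" for s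
  proof -
    have "(\<lambda>x. indicator {0..s} x *\<^sub>R g x) = (\<lambda>x. indicator {0..s} x *\<^sub>R g' x)"
      by (rule ext) (rule eqi[OF that])
    then show ?thesis using g'i[of s] unfolding set_integrable_def by simp
  qed
  have cont': "continuous_on UNIV (\<lambda>b. LBINT x:{0..b}. g' x)"
    by (rule continuous_on_LBINT) (rule g'i)
  have "continuous_on {0..t} (\<lambda>b. LBINT x:{0..b}. g' x)"
    by (rule continuous_on_subset[OF cont']) auto
  moreover have "(LBINT x:{0..s}. g' x) = (LINT u:{0..s}|lborel. g u)" if "s \<in> {0..t}" for s
  proof -
    have "(\<lambda>x. indicator {0..s} x *\<^sub>R g x) = (\<lambda>x. indicator {0..s} x *\<^sub>R g' x)"
      by (rule ext) (rule eqi[OF that])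
    then show ?thesis unfolding set_lebesgue_integral_def by simp
  qed
  moreover have "continuous_on {0..t} (\<lambda>b. LBINT x:{0..b}. g' x) = continuous_on {0..t} (\<lambda>s. LINT u:{0..s}|lborel. g u)"
    by (rule continuous_on_cong) (auto simp: calculation(2))
  ultimately show "continuous_on {0..t} (\<lambda>s. LINT u:{0..s}|lborel. g u)" by simp
qed

lemma set_integral_Icc_monomial:
  assumes "0 \<le> s"
  shows "(LINT u:{0..s}|lborel. c * u ^ k) = c * s ^ Suc k / Suc k"
proof -
  have e: "(\<lambda>u. indicator {0..s} u *\<^sub>R (c * u ^ k)) = (\<lambda>u. c * (u^k * indicator {0..s} u))"
    by (auto simp: indicator_def fun_eq_iff)
  have "(LINT u:{0..s}|lborel. c * u ^ k) = c * (\<integral>x. x^k * indicator {0..s} x \<partial>lborel)"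
    unfolding set_lebesgue_integral_def e by (rule integral_mult_right_zero)
  also have "\<dots> = c * s ^ Suc k / Suc k" using assms by (simp add: integral_power)
  finally show ?thesis .
qed

lemma measurable_section_Bsig:
  fixes b :: "real \<Rightarrow> (real \<Rightarrow> real) \<Rightarrow> real"
  assumes bna: "(\<lambda>(u,x). b u x) \<in> borel_measurable (restrict_space borel {0..t} \<Otimes>\<^sub>M Bsig t t)"
    and x: "x \<in> Cpath t"
  shows "(\<lambda>u. b u x) \<in> borel_measurable (restrict_space borel {0..t})"
proof -
  have "(\<lambda>u. (u, x)) \<in> measurable (restrict_space borel {0..t}) (restrict_space borel {0..t} \<Otimes>\<^sub>M Bsig t t)"
    by (rule measurable_Pair2') (simp add: x)
  from measurable_compose[OF this bna] show ?thesis by simp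
qed

lemma borel_measurable_set_integral_Bsig:
  fixes G :: "'w measure" and b :: "real \<Rightarrow> (real \<Rightarrow> real) \<Rightarrow> real"
  assumes b: "(\<lambda>(u, x). b u x) \<in> borel_measurable (restrict_space borel {0..s} \<Otimes>\<^sub>M Bsig t s)"
    and R: "R \<in> measurable G (Bsig t s)"
  shows "(\<lambda>\<omega>. LINT u:{0..s}|lborel. b u (R \<omega>)) \<in> borel_measurable G"
proof -
  have "(\<lambda>z. (fst z, R (snd z))) \<in> measurable (restrict_space borel {0..s} \<Otimes>\<^sub>M G)
      (restrict_space borel {0..s} \<Otimes>\<^sub>M Bsig t s)"
    by (rule measurable_Pair[OF measurable_fst measurable_compose[OF measurable_snd R]])
  from measurable_compose[OF this b]
  have "(\<lambda>(u, \<omega>). b u (R \<omega>)) \<in> borel_measurable (restrict_space borel {0..s} \<Otimes>\<^sub>M G)"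
    by (simp add: case_prod_beta)
  from measurable_extend_by_zero_Icc[OF this]
  show ?thesis by (rule borel_measurable_set_integral_Icc)
qed

lemma abs_set_integral_le:
  fixes f g :: "real \<Rightarrow> real"
  assumes "set_integrable lborel A f" "set_integrable lborel A g" "\<And>u. u \<in> A \<Longrightarrow> \<bar>f u\<bar> \<le> g u"
  shows "\<bar>LINT u:A|lborel. f u\<bar> \<le> (LINT u:A|lborel. g u)"
proof -
  have "\<bar>LINT u:A|lborel. f u\<bar> \<le> (LINT u:A|lborel. norm (f u))"
    using set_integral_norm_bound[OF assms(1)] by simp
  also have "\<dots> \<le> (LINT u:A|lborel. g u)"
    by (rule set_integral_mono) (use assms set_integrable_abs[OF assms(1)] in auto)
  finally show ?thesis .
qed

lemma power_over_fact_tendsto_0: "(\<lambda>k. (x::real) ^ k / fact k) \<longlonglongrightarrow> 0"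
proof -
  have "(\<lambda>k. x ^ k /\<^sub>R fact k) \<longlonglongrightarrow> 0" by (rule summable_LIMSEQ_zero[OF summable_exp_generic])
  then show ?thesis by (simp add: divide_inverse_commute)
qed

section \<open>Adaptedness of SDE solutions\<close>

primrec picard_iterate ::
  "(real \<Rightarrow> (real \<Rightarrow> real) \<Rightarrow> real) \<Rightarrow> real \<Rightarrow> (real \<Rightarrow> 'w \<Rightarrow> real) \<Rightarrow> nat \<Rightarrow> real \<Rightarrow> 'w \<Rightarrow> real"
where
  "picard_iterate b t w 0 = w"
| "picard_iterate b t w (Suc k) =
     (\<lambda>s \<omega>. w s \<omega> + (LINT u:{0..s}|lborel. b u (restr_path t (\<lambda>r. picard_iterate b t w k r \<omega>))))"

locale lipschitz_path_drift =
  fixes t Lc :: real and b :: "real \<Rightarrow> (real \<Rightarrow> real) \<Rightarrow> real"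
  assumes t_nonneg: "0 \<le> t" and Lc_nonneg: "0 \<le> Lc"
    and drift_nonanticipative: "\<And>s. s \<in> {0..t} \<Longrightarrow>
        (\<lambda>(u, x). b u x) \<in> borel_measurable (restrict_space borel {0..s} \<Otimes>\<^sub>M Bsig t s)"
    and drift_lipschitz: "\<And>s x1 x2 D. s \<in> {0..t} \<Longrightarrow> x1 \<in> Cpath t \<Longrightarrow> x2 \<in> Cpath t \<Longrightarrow>
        (\<forall>u\<in>{0..s}. \<bar>x1 u - x2 u\<bar> \<le> D) \<Longrightarrow> \<bar>b s x1 - b s x2\<bar> \<le> Lc * D"
    and drift_bounded: "\<And>x. x \<in> Cpath t \<Longrightarrow> \<exists>C. \<forall>s\<in>{0..t}. \<bar>b s x\<bar> \<le> C"
begin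

lemma drift_primitive:
  assumes x: "x \<in> Cpath t"
  shows "\<And>s. s \<in> {0..t} \<Longrightarrow> set_integrable lborel {0..s} (\<lambda>u. b u x)"
    and "continuous_on {0..t} (\<lambda>s. LINT u:{0..s}|lborel. b u x)"
proof -
  obtain C where "\<forall>s\<in>{0..t}. \<bar>b s x\<bar> \<le> C" using drift_bounded[OF x] by blast
  moreover have "t \<in> {0..t}" using t_nonneg by simp
  then have "(\<lambda>u. b u x) \<in> borel_measurable (restrict_space borel {0..t})"
    by (rule measurable_section_Bsig[OF drift_nonanticipative x])
  ultimately show "\<And>s. s \<in> {0..t} \<Longrightarrow> set_integrable lborel {0..s} (\<lambda>u. b u x)"
    and "continuous_on {0..t} (\<lambda>s. LINT u:{0..s}|lborel. b u x)"
    using set_integrable_and_continuous_primitive[of "\<lambda>u. b u x" t C] by auto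
qed

lemma picard_iterate_continuous_adapted:
  assumes w: "\<And>\<omega>. \<omega> \<in> space M \<Longrightarrow> continuous_on {0..t} (\<lambda>s. w s \<omega>)"
  shows "\<forall>\<omega>\<in>space M. continuous_on {0..t} (\<lambda>s. picard_iterate b t w k s \<omega>)"
    and "\<forall>s\<in>{0..t}. picard_iterate b t w k s \<in> borel_measurable (natural_filtration M w s)"
proof (induction k)
  case 0
  show "\<forall>\<omega>\<in>space M. continuous_on {0..t} (\<lambda>s. picard_iterate b t w 0 s \<omega>)" using w by simp
  show "\<forall>s\<in>{0..t}. picard_iterate b t w 0 s \<in> borel_measurable (natural_filtration M w s)"
    by (auto intro: measurable_natural_filtration)
next
  case (Suc k)
  define R where "R \<omega> = restr_path t (\<lambda>r. picard_iterate b t w k r \<omega>)" for \<omega>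
  have R: "R \<omega> \<in> Cpath t" if "\<omega> \<in> space M" for \<omega>
    unfolding R_def using Suc.IH(1) that by (intro restr_path_in_Cpath) auto
  have iterate: "picard_iterate b t w (Suc k) s \<omega> = w s \<omega> + (LINT u:{0..s}|lborel. b u (R \<omega>))" for s \<omega>
    by (simp add: R_def)
  show "\<forall>\<omega>\<in>space M. continuous_on {0..t} (\<lambda>s. picard_iterate b t w (Suc k) s \<omega>)"
  proof
    fix \<omega> assume \<omega>: "\<omega> \<in> space M"
    show "continuous_on {0..t} (\<lambda>s. picard_iterate b t w (Suc k) s \<omega>)"
      unfolding iterate by (intro continuous_on_add w[OF \<omega>] drift_primitive(2)[OF R[OF \<omega>]])
  qed
  show "\<forall>s\<in>{0..t}. picard_iterate b t w (Suc k) s \<in> borel_measurable (natural_filtration M w s)"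
  proof
    fix s assume s: "s \<in> {0..t}"
    have "R \<in> measurable (natural_filtration M w s) (Bsig t s)"
    proof (rule measurable_Bsig)
      show "R \<omega> \<in> Cpath t" if "\<omega> \<in> space (natural_filtration M w s)" for \<omega>
        using that by (intro R) simp
      fix u assume u: "u \<in> {0..s}"
      then have "u \<in> {0..t}" using s by simp
      then have "picard_iterate b t w k u \<in> borel_measurable (natural_filtration M w u)"
        using Suc.IH(2) by blast
      moreover have "subalgebra (natural_filtration M w s) (natural_filtration M w u)"
        using sets_natural_filtration_mono[of u s M w] u by (simp add: subalgebra_def)
      ultimately have "picard_iterate b t w k u \<in> borel_measurable (natural_filtration M w s)"
        by (rule measurable_from_subalg[rotated])
      moreover have "R \<omega> u = picard_iterate b t w k u \<omega>" for \<omega>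
        using u s by (simp add: R_def)
      ultimately show "(\<lambda>\<omega>. R \<omega> u) \<in> borel_measurable (natural_filtration M w s)" by simp
    qed
    then have "(\<lambda>\<omega>. LINT u:{0..s}|lborel. b u (R \<omega>)) \<in> borel_measurable (natural_filtration M w s)"
      by (rule borel_measurable_set_integral_Bsig[OF drift_nonanticipative[OF s]])
    moreover have "w s \<in> borel_measurable (natural_filtration M w s)"
      using s by (intro measurable_natural_filtration) auto
    ultimately show "picard_iterate b t w (Suc k) s \<in> borel_measurable (natural_filtration M w s)"
      unfolding iterate[abs_def] by measurable
  qed
qed

lemma picard_iterate_error:
  assumes w: "\<And>\<omega>. \<omega> \<in> space M \<Longrightarrow> continuous_on {0..t} (\<lambda>s. w s \<omega>)"
    and X: "sde_solution M t b w X" and \<omega>: "\<omega> \<in> space M"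
    and D: "\<forall>u\<in>{0..t}. \<bar>w u \<omega> - X u \<omega>\<bar> \<le> D"
    and u: "u \<in> {0..t}"
  shows "\<bar>picard_iterate b t w k u \<omega> - X u \<omega>\<bar> \<le> D * (Lc * u) ^ k / fact k"
  using u
proof (induction k arbitrary: u)
  case 0
  then show ?case using D by simp
next
  case (Suc k s)
  define R where "R = restr_path t (\<lambda>r. picard_iterate b t w k r \<omega>)"
  define RX where "RX = restr_path t (\<lambda>r. X r \<omega>)"
  have R: "R \<in> Cpath t"
    unfolding R_def by (rule restr_path_in_Cpath)
      (use picard_iterate_continuous_adapted(1)[where M=M and w=w, OF w] \<omega> in auto)
  have X_sol: "continuous_on {0..t} (\<lambda>r. X r \<omega>)" "set_integrable lborel {0..s} (\<lambda>u. b u RX)"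
    "X s \<omega> = (LINT u:{0..s}|lborel. b u RX) + w s \<omega>"
    using X \<omega> Suc.prems unfolding sde_solution_def RX_def by auto
  have RX: "RX \<in> Cpath t" unfolding RX_def by (rule restr_path_in_Cpath[OF X_sol(1)])
  have D0: "0 \<le> D"
    using D t_nonneg by (meson abs_ge_zero atLeastAtMost_iff order.refl order_trans)
  define c where "c = Lc * D * Lc ^ k / fact k"
  have pointwise: "\<bar>b u R - b u RX\<bar> \<le> c * u ^ k" if u: "u \<in> {0..s}" for u
  proof -
    have ut: "u \<in> {0..t}" using u Suc.prems by auto
    have "\<bar>R v - RX v\<bar> \<le> D * (Lc * u) ^ k / fact k" if v: "v \<in> {0..u}" for v
    proof -
      have "\<bar>R v - RX v\<bar> \<le> D * (Lc * v) ^ k / fact k"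
        using Suc.IH[of v] v ut by (simp add: R_def RX_def)
      also have "(Lc * v) ^ k \<le> (Lc * u) ^ k"
        using v Lc_nonneg by (intro power_mono mult_left_mono) auto
      then have "D * (Lc * v) ^ k / fact k \<le> D * (Lc * u) ^ k / fact k"
        using D0 by (intro divide_right_mono mult_left_mono) auto
      finally show ?thesis .
    qed
    then have "\<bar>b u R - b u RX\<bar> \<le> Lc * (D * (Lc * u) ^ k / fact k)"
      by (intro drift_lipschitz[OF ut R RX]) auto
    also have "\<dots> = c * u ^ k" by (simp add: c_def power_mult_distrib)
    finally show ?thesis .
  qed
  have R_int: "set_integrable lborel {0..s} (\<lambda>u. b u R)"
    using drift_primitive(1)[OF R] Suc.prems by auto
  have monomial_int: "set_integrable lborel {0..s} (\<lambda>u. c * u ^ k)"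
    by (rule borel_integrable_atLeastAtMost') (intro continuous_intros)
  have "picard_iterate b t w (Suc k) s \<omega> - X s \<omega> = (LINT u:{0..s}|lborel. b u R - b u RX)"
    using X_sol(3) set_integral_diff(2)[OF R_int X_sol(2)] by (simp add: R_def)
  also have "\<bar>\<dots>\<bar> \<le> (LINT u:{0..s}|lborel. c * u ^ k)"
    by (rule abs_set_integral_le[OF set_integral_diff(1)[OF R_int X_sol(2)] monomial_int pointwise])
  also have "\<dots> = c * s ^ Suc k / Suc k"
    using Suc.prems by (intro set_integral_Icc_monomial) auto
  also have "\<dots> = D * (Lc * s) ^ Suc k / fact (Suc k)"
    by (simp add: c_def power_mult_distrib field_simps)
  finally show ?case .
qed

lemma sde_solution_adapted:
  assumes w: "\<And>\<omega>. \<omega> \<in> space M \<Longrightarrow> continuous_on {0..t} (\<lambda>s. w s \<omega>)"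
    and X: "sde_solution M t b w X" and s: "s \<in> {0..t}"
  shows "X s \<in> borel_measurable (natural_filtration M w s)"
proof (rule borel_measurable_LIMSEQ_real)
  show "picard_iterate b t w k s \<in> borel_measurable (natural_filtration M w s)" for k
    using picard_iterate_continuous_adapted(2)[where M=M and w=w, OF w] s by auto
  fix \<omega> assume "\<omega> \<in> space (natural_filtration M w s)"
  then have \<omega>: "\<omega> \<in> space M" by simp
  have "continuous_on {0..t} (\<lambda>u. w u \<omega> - X u \<omega>)"
    using w[OF \<omega>] X \<omega> unfolding sde_solution_def by (intro continuous_on_diff) auto
  then obtain D where D: "\<forall>u\<in>{0..t}. \<bar>w u \<omega> - X u \<omega>\<bar> \<le> D"
    using continuous_on_Icc_abs_bounded by blast
  have "(\<lambda>k. D * ((Lc * s) ^ k / fact k)) \<longlonglongrightarrow> D * 0"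
    by (intro tendsto_mult tendsto_const power_over_fact_tendsto_0)
  then have "(\<lambda>k. D * (Lc * s) ^ k / fact k) \<longlonglongrightarrow> 0" by simp
  then have "(\<lambda>k. picard_iterate b t w k s \<omega> - X s \<omega>) \<longlonglongrightarrow> 0"
    by (rule Lim_null_comparison[rotated])
      (use picard_iterate_error[where M=M and w=w, OF w X \<omega> D s] in auto)
  then have "(\<lambda>k. (picard_iterate b t w k s \<omega> - X s \<omega>) + X s \<omega>) \<longlonglongrightarrow> 0 + X s \<omega>"
    by (intro tendsto_add tendsto_const)
  then show "(\<lambda>k. picard_iterate b t w k s \<omega>) \<longlonglongrightarrow> X s \<omega>" by simp
qed

end

lemma set_integral_nonneg_bounded:
  fixes g :: "real \<Rightarrow> real"
  assumes A: "A \<in> sets M" "emeasure M A < \<infinity>"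
    and g: "\<And>u. u \<in> A \<Longrightarrow> 0 \<le> g u \<and> g u \<le> D"
  shows "0 \<le> (LINT u:A|M. g u) \<and> (LINT u:A|M. g u) \<le> D * measure M A"
proof
  show "0 \<le> (LINT u:A|M. g u)"
    unfolding set_lebesgue_integral_def by (rule Bochner_Integration.integral_nonneg) (auto simp: g indicator_def)
  have D0: "0 \<le> D \<or> A = {}" using g by (cases "A = {}") (auto intro: order_trans)
  show "(LINT u:A|M. g u) \<le> D * measure M A"
  proof (cases "set_integrable M A g")
    case True
    have ci: "set_integrable M A (\<lambda>_. D)"
      unfolding set_integrable_def using integrable_real_indicator[OF A]
      by (rule integrable_scaleR_left)
    have "(LINT u:A|M. g u) \<le> (LINT u:A|M. D)" by (rule set_integral_mono[OF True ci]) (use g in auto)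
    also have "\<dots> = D * measure M A" using A by (subst set_integral_const) (auto simp: less_top)
    finally show ?thesis .
  next
    case False
    then have "(LINT u:A|M. g u) = 0"
      unfolding set_integrable_def set_lebesgue_integral_def by (rule not_integrable_integral_eq)
    then show ?thesis using D0 by auto
  qed
qed

lemma interval_measure_Icc_bounded:
  fixes k :: "real \<Rightarrow> real"
  assumes k_mono: "mono k" and k_rc: "\<And>u. continuous (at_right u) k" and s: "s \<in> {0..t}"
  shows "emeasure (interval_measure k) {0..s} < \<infinity>" "measure (interval_measure k) {0..s} \<le> k t - k (-1)"
proof -
  have mk: "\<And>x y. x \<le> y \<Longrightarrow> k x \<le> k y" using k_mono by (simp add: monoD)
  have "emeasure (interval_measure k) {0..s} \<le> emeasure (interval_measure k) {-1<..t}"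
    using s by (intro emeasure_mono) auto
  also have "\<dots> = ennreal (k t - k (-1))" using s by (subst emeasure_interval_measure_Ioc) (auto intro: mk k_rc)
  finally have le: "emeasure (interval_measure k) {0..s} \<le> ennreal (k t - k (-1))" .
  then show "emeasure (interval_measure k) {0..s} < \<infinity>" using le_less_trans by fastforce
  have "k (-1) \<le> k t" using s by (intro mk) auto
  then show "measure (interval_measure k) {0..s} \<le> k t - k (-1)"
    using le unfolding measure_def by (simp add: enn2real_leI)
qed

lemma set_integral_interval_measure_bounded:
  fixes k g :: "real \<Rightarrow> real"
  assumes k_mono: "mono k" and k_rc: "\<And>u. continuous (at_right u) k" and s: "s \<in> {0..t}"
    and g: "\<And>u. u \<in> {0..s} \<Longrightarrow> 0 \<le> g u \<and> g u \<le> D"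
  shows "0 \<le> (LINT u:{0..s}|interval_measure k. g u) \<and> (LINT u:{0..s}|interval_measure k. g u) \<le> D * (k t - k (-1))"
proof -
  have D0: "0 \<le> D" using g[of 0] s by auto
  have lb: "0 \<le> (LINT u:{0..s}|interval_measure k. g u) \<and> (LINT u:{0..s}|interval_measure k. g u) \<le> D * measure (interval_measure k) {0..s}"
    by (rule set_integral_nonneg_bounded) (use interval_measure_Icc_bounded[OF k_mono k_rc s] g in auto)
  have "D * measure (interval_measure k) {0..s} \<le> D * (k t - k (-1))"
    using interval_measure_Icc_bounded[OF k_mono k_rc s] D0 by (intro mult_left_mono) auto
  then show ?thesis using lb by linarith
qed

lemma scale_in_Cpath: "x \<in> Cpath t \<Longrightarrow> (\<lambda>u. e * x u) \<in> Cpath t"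
  unfolding Cpath_def by (auto intro: continuous_intros)

lemma measurable_scale_Bsig: "(\<lambda>x u. e * x u) \<in> measurable (Bsig t s) (Bsig t s)"
proof (rule measurable_sigma_sets[OF sets_Bsig Bsig_generators_subset])
  show "(\<lambda>x u. e * x u) \<in> space (Bsig t s) \<rightarrow> Cpath t" using scale_in_Cpath by auto
  fix y assume "y \<in> {{x \<in> Cpath t. x u \<in> A} | u A. u \<in> {0..s} \<and> A \<in> sets (borel :: real measure)}"
  then obtain u A where y: "y = {x \<in> Cpath t. x u \<in> A}" "u \<in> {0..s}" "A \<in> sets (borel :: real measure)"
    by auto
  have m: "(\<lambda>x. e * x u) \<in> borel_measurable (Bsig t s)" using measurable_coordinate_Bsig[OF y(2)] by measurable
  have "(\<lambda>x u. e * x u) -` y \<inter> space (Bsig t s) = (\<lambda>x. e * x u) -` A \<inter> space (Bsig t s)"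
    using scale_in_Cpath by (auto simp: y(1))
  also have "\<dots> \<in> sets (Bsig t s)" by (rule measurable_sets[OF m y(3)])
  finally show "(\<lambda>x u. e * x u) -` y \<inter> space (Bsig t s) \<in> sets (Bsig t s)" .
qed

lemma scaled_nonanticipative:
  fixes a :: "real \<Rightarrow> (real \<Rightarrow> real) \<Rightarrow> 'a \<Rightarrow> real"
  assumes na: "(\<lambda>(u,x). a u x \<beta>) \<in> borel_measurable (restrict_space borel {0..s} \<Otimes>\<^sub>M Bsig t s)"
  shows "(\<lambda>(u,x). scaled e a u x \<beta>) \<in> borel_measurable (restrict_space borel {0..s} \<Otimes>\<^sub>M Bsig t s)"
proof -
  have pm: "(\<lambda>z. (fst z, (\<lambda>u. e * snd z u))) \<in> measurable (restrict_space borel {0..s} \<Otimes>\<^sub>M Bsig t s) (restrict_space borel {0..s} \<Otimes>\<^sub>M Bsig t s)"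
    by (rule measurable_Pair[OF measurable_fst measurable_compose[OF measurable_snd measurable_scale_Bsig]])
  have "(\<lambda>z. a (fst z) (\<lambda>u. e * snd z u) \<beta>) \<in> borel_measurable (restrict_space borel {0..s} \<Otimes>\<^sub>M Bsig t s)"
    using measurable_compose[OF pm na] by simp
  then have "(\<lambda>z. a (fst z) (\<lambda>u. e * snd z u) \<beta> / e) \<in> borel_measurable (restrict_space borel {0..s} \<Otimes>\<^sub>M Bsig t s)"
    by measurable
  then show ?thesis by (simp add: scaled_def case_prod_beta)
qed

lemma scaled_lipschitz:
  fixes a :: "real \<Rightarrow> (real \<Rightarrow> real) \<Rightarrow> 'a \<Rightarrow> real" and k :: "real \<Rightarrow> real"
  assumes k_mono: "mono k" and k_rc: "\<And>u. continuous (at_right u) k"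
    and a_lip: "\<And>s x1 x2. s \<in> {0..t} \<Longrightarrow> x1 \<in> Cpath t \<Longrightarrow> x2 \<in> Cpath t \<Longrightarrow>
        \<bar>a s x1 \<beta> - a s x2 \<beta>\<bar>
          \<le> L1 * (LINT u:{0..s}|interval_measure k. \<bar>x1 u - x2 u\<bar>) + L2 * \<bar>x1 s - x2 s\<bar>"
    and e: "e > 0"
    and s: "s \<in> {0..t}" and x1: "x1 \<in> Cpath t" and x2: "x2 \<in> Cpath t"
    and D: "\<forall>u\<in>{0..s}. \<bar>x1 u - x2 u\<bar> \<le> D"
  shows "\<bar>scaled e a s x1 \<beta> - scaled e a s x2 \<beta>\<bar> \<le> (\<bar>L1\<bar> * (k t - k (-1)) + \<bar>L2\<bar>) * D"
proof -
  define y1 where "y1 = (\<lambda>u. e * x1 u)"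
  define y2 where "y2 = (\<lambda>u. e * x2 u)"
  have y: "y1 \<in> Cpath t" "y2 \<in> Cpath t" using scale_in_Cpath x1 x2 by (auto simp: y1_def y2_def)
  have dist: "\<bar>y1 u - y2 u\<bar> = e * \<bar>x1 u - x2 u\<bar>" for u
    using e by (simp add: y1_def y2_def abs_mult right_diff_distrib[symmetric])
  have I: "0 \<le> (LINT u:{0..s}|interval_measure k. \<bar>y1 u - y2 u\<bar>)
      \<and> (LINT u:{0..s}|interval_measure k. \<bar>y1 u - y2 u\<bar>) \<le> (e * D) * (k t - k (-1))"
    by (rule set_integral_interval_measure_bounded[OF k_mono k_rc s])
      (use D e in \<open>auto simp: dist intro: mult_left_mono\<close>)
  have "\<bar>a s y1 \<beta> - a s y2 \<beta>\<bar>
      \<le> L1 * (LINT u:{0..s}|interval_measure k. \<bar>y1 u - y2 u\<bar>) + L2 * \<bar>y1 s - y2 s\<bar>"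
    by (rule a_lip[OF s y])
  also have "\<dots> \<le> \<bar>L1\<bar> * ((e * D) * (k t - k (-1))) + \<bar>L2\<bar> * (e * D)"
  proof (rule add_mono)
    show "L1 * (LINT u:{0..s}|interval_measure k. \<bar>y1 u - y2 u\<bar>) \<le> \<bar>L1\<bar> * ((e * D) * (k t - k (-1)))"
      using I by (meson abs_ge_self abs_ge_zero mult_mono order_trans)
    have "\<bar>y1 s - y2 s\<bar> \<le> e * D" using D s e by (simp add: dist)
    then show "L2 * \<bar>y1 s - y2 s\<bar> \<le> \<bar>L2\<bar> * (e * D)"
      by (meson abs_ge_self abs_ge_zero mult_mono order_trans)
  qed
  also have "\<dots> = e * ((\<bar>L1\<bar> * (k t - k (-1)) + \<bar>L2\<bar>) * D)" by (simp add: algebra_simps)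
  finally show ?thesis
    using e by (simp add: scaled_def y1_def y2_def diff_divide_distrib[symmetric] divide_le_eq mult.commute)
qed

lemma scaled_bounded_on_path:
  fixes a :: "real \<Rightarrow> (real \<Rightarrow> real) \<Rightarrow> 'a \<Rightarrow> real" and k :: "real \<Rightarrow> real"
  assumes k_mono: "mono k" and k_rc: "\<And>u. continuous (at_right u) k"
    and a_growth: "\<And>s x. s \<in> {0..t} \<Longrightarrow> x \<in> Cpath t \<Longrightarrow>
        \<bar>a s x \<beta>\<bar> \<le> L1 * (LINT u:{0..s}|interval_measure k. 1 + \<bar>x u\<bar>) + L2 * (1 + \<bar>x s\<bar>)"
    and e: "e > 0" and x: "x \<in> Cpath t"
  shows "\<exists>C. \<forall>s\<in>{0..t}. \<bar>scaled e a s x \<beta>\<bar> \<le> C"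
proof -
  define y where "y = (\<lambda>u. e * x u)"
  have y: "y \<in> Cpath t" using scale_in_Cpath x by (auto simp: y_def)
  obtain R where R: "\<forall>u\<in>{0..t}. \<bar>y u\<bar> \<le> R"
    using continuous_on_Icc_abs_bounded[OF Cpath_continuous_on[OF y]] by blast
  have "\<bar>a s y \<beta>\<bar> \<le> \<bar>L1\<bar> * ((1 + R) * (k t - k (-1))) + \<bar>L2\<bar> * (1 + R)" if s: "s \<in> {0..t}" for s
  proof -
    have I: "0 \<le> (LINT u:{0..s}|interval_measure k. 1 + \<bar>y u\<bar>)
        \<and> (LINT u:{0..s}|interval_measure k. 1 + \<bar>y u\<bar>) \<le> (1 + R) * (k t - k (-1))"
      by (rule set_integral_interval_measure_bounded[OF k_mono k_rc s]) (use R s in auto)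
    have "L1 * (LINT u:{0..s}|interval_measure k. 1 + \<bar>y u\<bar>) + L2 * (1 + \<bar>y s\<bar>)
        \<le> \<bar>L1\<bar> * ((1 + R) * (k t - k (-1))) + \<bar>L2\<bar> * (1 + R)"
    proof (rule add_mono)
      show "L1 * (LINT u:{0..s}|interval_measure k. 1 + \<bar>y u\<bar>) \<le> \<bar>L1\<bar> * ((1 + R) * (k t - k (-1)))"
        using I by (meson abs_ge_self abs_ge_zero mult_mono order_trans)
      have "1 + \<bar>y s\<bar> \<le> 1 + R" using R s by auto
      then show "L2 * (1 + \<bar>y s\<bar>) \<le> \<bar>L2\<bar> * (1 + R)"
        by (meson abs_ge_self abs_ge_zero add_nonneg_nonneg mult_mono order_trans zero_le_one)
    qed
    then show ?thesis using a_growth[OF s y] by linarith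
  qed
  then have "\<forall>s\<in>{0..t}. \<bar>scaled e a s x \<beta>\<bar> \<le> (\<bar>L1\<bar> * ((1 + R) * (k t - k (-1))) + \<bar>L2\<bar> * (1 + R)) / e"
    using e by (auto simp: scaled_def y_def divide_right_mono)
  then show ?thesis by blast
qed

section \<open>The innovation process\<close>

context lipschitz_path_drift
begin

lemma measurable_solution_path:
  assumes BM: "brownian_motion M t w" and X: "sde_solution M t b w X" and p: "p \<in> {0..t}"
  shows "(\<lambda>\<omega>. restr_path t (\<lambda>r. X r \<omega>)) \<in> measurable (natural_filtration M w p) (Bsig t p)"
proof (rule measurable_Bsig)
  show "restr_path t (\<lambda>r. X r \<omega>) \<in> Cpath t" if "\<omega> \<in> space (natural_filtration M w p)" for \<omega>
    using X that unfolding sde_solution_def by (auto intro: restr_path_in_Cpath)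
  have w: "\<And>\<omega>. \<omega> \<in> space M \<Longrightarrow> continuous_on {0..t} (\<lambda>s. w s \<omega>)"
    using BM unfolding brownian_motion_def by auto
  fix u assume u: "u \<in> {0..p}"
  then have "u \<in> {0..t}" using p by simp
  then have "X u \<in> borel_measurable (natural_filtration M w u)"
    using sde_solution_adapted[where M=M and w=w and X=X and s=u] w X by blast
  moreover have "subalgebra (natural_filtration M w p) (natural_filtration M w u)"
    using sets_natural_filtration_mono[of u p M w] u by (simp add: subalgebra_def)
  ultimately have "X u \<in> borel_measurable (natural_filtration M w p)"
    by (rule measurable_from_subalg[rotated])
  moreover have "restr_path t (\<lambda>r. X r \<omega>) u = X u \<omega>" for \<omega>
    using u p by simp
  ultimately show "(\<lambda>\<omega>. restr_path t (\<lambda>r. X r \<omega>) u) \<in> borel_measurable (natural_filtration M w p)"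
    by simp
qed

lemma measurable_innovation:
  assumes s: "s \<in> {0..t}"
  shows "(\<lambda>x. x s - (LINT u:{0..s}|lborel. b u x)) \<in> borel_measurable (Bsig t s)"
proof -
  have "(\<lambda>x. LINT u:{0..s}|lborel. b u x) \<in> borel_measurable (Bsig t s)"
    using borel_measurable_set_integral_Bsig[OF drift_nonanticipative[OF s] measurable_ident] by simp
  moreover have "(\<lambda>x. x s) \<in> borel_measurable (Bsig t s)"
    using measurable_coordinate_Bsig[of s s t] s by simp
  ultimately show ?thesis by measurable
qed

text \<open>Along solution paths the innovation coincides with the driving noise \<open>w\<close>, and the
  solution is adapted to the filtration of \<open>w\<close>.\<close>

lemma path_law_innovation_brownian:
  assumes BM: "brownian_motion M t w" and X: "sde_solution M t b w X"
  shows "filtered_brownian_motion (path_law M t X) (Bsig t) t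
    (\<lambda>s x. x s - (LINT u:{0..s}|lborel. b u x))"
proof -
  define f where "f \<omega> = restr_path t (\<lambda>r. X r \<omega>)" for \<omega>
  define W where "W s x = x s - (LINT u:{0..s}|lborel. b u x)" for s x
  define P where "P = path_law M t X"
  have "prob_space M" and w: "\<And>s. s \<in> {0..t} \<Longrightarrow> w s \<in> borel_measurable M"
    using BM unfolding brownian_motion_def by auto
  interpret M: prob_space M by fact
  have f: "f \<in> measurable M (Bsig t t)"
  proof (rule measurable_from_subalg)
    show "subalgebra M (natural_filtration M w t)"
      using w t_nonneg by (auto simp: subalgebra_def intro!: sets_natural_filtration_subset)
    show "f \<in> measurable (natural_filtration M w t) (Bsig t t)"
      unfolding f_def using t_nonneg by (intro measurable_solution_path[OF BM X]) auto
  qed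
  have P: "P = distr M (Bsig t t) f" by (simp add: P_def path_law_def f_def[abs_def])
  have space_P: "space P = Cpath t" and sets_P: "sets P = sets (Bsig t t)" by (simp_all add: P)
  have W_P: "(\<lambda>x. W q x - W p x) \<in> borel_measurable P" if "p \<in> {0..t}" "q \<in> {0..t}" for p q
  proof -
    have "W s \<in> borel_measurable (Bsig t t)" if "s \<in> {0..t}" for s
    proof (rule measurable_from_subalg)
      show "subalgebra (Bsig t t) (Bsig t s)"
        using sets_Bsig_mono[of s t t] that by (simp add: subalgebra_def)
      show "W s \<in> borel_measurable (Bsig t s)"
        using measurable_innovation[OF that] by (simp add: W_def[abs_def])
    qed
    then show ?thesis using that by (simp add: measurable_cong_sets[OF sets_P refl])
  qed
  have W_f: "W s (f \<omega>) = w s \<omega>" if "\<omega> \<in> space M" "s \<in> {0..t}" for s \<omega>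
    using X that unfolding sde_solution_def by (simp add: W_def f_def)
  have preimage: "f -` ((\<lambda>x. W q x - W p x) -` C \<inter> space P) \<inter> space M = (\<lambda>\<omega>. w q \<omega> - w p \<omega>) -` C \<inter> space M"
    if "p \<in> {0..t}" "q \<in> {0..t}" for p q C
    using measurable_space[OF f] W_f that by (auto simp: space_P)
  have measure_P: "measure P S = measure M (f -` S \<inter> space M)" if "S \<in> sets (Bsig t t)" for S
    using measure_distr[OF f that] by (simp add: P)
  show ?thesis
    unfolding W_def[symmetric] P_def[symmetric]
  proof (intro filtered_brownian_motion.intro filtered_brownian_motion_axioms.intro)
    show "prob_space P" unfolding P by (rule M.prob_space_distr[OF f])
    show "subalgebra P (Bsig t s)" if "0 \<le> s" "s \<le> t" for s
      using sets_Bsig_mono[of s t t] that by (simp add: subalgebra_def space_P sets_P)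
    show "subalgebra (Bsig t s') (Bsig t s)" if "0 \<le> s" "s \<le> s'" "s' \<le> t" for s s'
      using sets_Bsig_mono[of s s' t] that by (simp add: subalgebra_def)
    show "W s \<in> borel_measurable (Bsig t s)" if "0 \<le> s" "s \<le> t" for s
      using measurable_innovation[of s] that by (simp add: W_def[abs_def])
  next
    fix p q A C assume pq: "0 \<le> p" "p < q" "q \<le> t" and A: "A \<in> sets (Bsig t p)" and C: "C \<in> sets (borel :: real measure)"
    have A_t: "A \<in> sets (Bsig t t)" using A sets_Bsig_mono[of p t t] pq by auto
    have D_t: "(\<lambda>x. W q x - W p x) -` C \<inter> space P \<in> sets (Bsig t t)"
      using measurable_sets[OF W_P C] pq sets_P by simp
    have "f -` A \<inter> space M \<in> sets (natural_filtration M w p)"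
      using measurable_sets[OF measurable_solution_path[OF BM X] A] pq by (simp add: f_def[abs_def])
    then have "measure M ((f -` A \<inter> space M) \<inter> ((\<lambda>\<omega>. w q \<omega> - w p \<omega>) -` C \<inter> space M))
        = measure M (f -` A \<inter> space M) * measure M ((\<lambda>\<omega>. w q \<omega> - w p \<omega>) -` C \<inter> space M)"
      by (rule brownian_motion_indep_natural_filtration[OF BM pq _ C])
    moreover have "f -` (A \<inter> ((\<lambda>x. W q x - W p x) -` C \<inter> space P)) \<inter> space M
        = (f -` A \<inter> space M) \<inter> ((\<lambda>\<omega>. w q \<omega> - w p \<omega>) -` C \<inter> space M)"
      using preimage[of p q C] pq by auto
    ultimately show "measure P (A \<inter> ((\<lambda>x. W q x - W p x) -` C \<inter> space P))
        = measure P A * measure P ((\<lambda>x. W q x - W p x) -` C \<inter> space P)"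
      using measure_P[OF A_t] measure_P[OF D_t] measure_P[of "A \<inter> ((\<lambda>x. W q x - W p x) -` C \<inter> space P)"]
        A_t D_t preimage[of p q C] pq by auto
  next
    fix p q assume pq: "0 \<le> p" "p < q" "q \<le> t"
    have "(\<lambda>x. W q x - W p x) \<in> measurable (Bsig t t) lborel"
      using W_P[of p q] pq unfolding measurable_cong_sets[OF sets_P refl, of borel] measurable_lborel1 by simp
    then have "distr P lborel (\<lambda>x. W q x - W p x) = distr M lborel ((\<lambda>x. W q x - W p x) \<circ> f)"
      unfolding P by (rule distr_distr[OF _ f])
    also have "\<dots> = distr M lborel (\<lambda>\<omega>. w q \<omega> - w p \<omega>)"
      using W_f pq by (intro distr_cong) auto
    finally show "distr P lborel (\<lambda>x. W q x - W p x)
        = density lborel (\<lambda>y. ennreal (normal_density 0 (sqrt (q - p)) y))"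
      using brownian_motion_increment_normal[OF BM pq] by simp
  qed
qed

end

context filtered_brownian_motion
begin

text \<open>Squaring the density doubles the exponent; it splits as \<open>exp (3 c\<^sup>2 \<integral>H\<^sup>2)\<close> times the
  stochastic exponential with parameter \<open>2 c\<close>, whose mean is at most one.\<close>

lemma nn_integral_sq_exp_ito_integral_le:
  assumes ito: "is_ito_integral P F T W H Z" and T: "0 \<le> T"
    and H_bounded: "\<And>s x. s \<in> {0..T} \<Longrightarrow> x \<in> space P \<Longrightarrow> \<bar>H s x\<bar> \<le> C"
    and H_meas: "(\<lambda>(x, s). if s \<in> {0..T} then H s x else 0) \<in> borel_measurable (P \<Otimes>\<^sub>M lborel)"
  shows "(\<integral>\<^sup>+x. ennreal (exp (c * Z x - c\<^sup>2 / 2 * (LINT u:{0..T}|lborel. (H u x)\<^sup>2))) ^ 2 \<partial>P)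
    \<le> ennreal (exp (3 * c\<^sup>2 * C\<^sup>2 * T))"
proof -
  define J where "J x = (LINT u:{0..T}|lborel. (H u x)\<^sup>2)" for x
  have Z: "Z \<in> borel_measurable P" using ito unfolding is_ito_integral_def by blast
  have J: "J \<in> borel_measurable P"
    unfolding J_def[abs_def] by (rule borel_measurable_set_integral_sq[OF H_meas])
  have J_bounded: "0 \<le> J x \<and> J x \<le> C\<^sup>2 * T" if x: "x \<in> space P" for x
  proof -
    have "(H u x)\<^sup>2 \<le> C\<^sup>2" if "u \<in> {0..T}" for u
      using H_bounded[OF that x] by (metis abs_ge_zero power2_abs power_mono)
    then have "0 \<le> J x \<and> J x \<le> C\<^sup>2 * measure lborel {0..T}"
      unfolding J_def using T by (intro set_integral_nonneg_bounded) auto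
    then show ?thesis using T by simp
  qed
  have "(\<integral>\<^sup>+x. ennreal (exp (c * Z x - c\<^sup>2 / 2 * J x)) ^ 2 \<partial>P)
      \<le> (\<integral>\<^sup>+x. ennreal (exp (3 * c\<^sup>2 * C\<^sup>2 * T)) * ennreal (exp ((2*c) * Z x - (2*c)\<^sup>2 * J x)) \<partial>P)"
  proof (rule nn_integral_mono)
    fix x assume x: "x \<in> space P"
    have "exp (c * Z x - c\<^sup>2 / 2 * J x) ^ 2 = exp (3 * c\<^sup>2 * J x) * exp ((2*c) * Z x - (2*c)\<^sup>2 * J x)"
      by (simp add: power2_eq_square exp_add[symmetric] algebra_simps)
    also have "\<dots> \<le> exp (3 * c\<^sup>2 * C\<^sup>2 * T) * exp ((2*c) * Z x - (2*c)\<^sup>2 * J x)"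
      using J_bounded[OF x] by (intro mult_right_mono) (auto simp: mult_left_mono)
    finally show "ennreal (exp (c * Z x - c\<^sup>2 / 2 * J x)) ^ 2
        \<le> ennreal (exp (3 * c\<^sup>2 * C\<^sup>2 * T)) * ennreal (exp ((2*c) * Z x - (2*c)\<^sup>2 * J x))"
      by (simp add: ennreal_power ennreal_mult[symmetric] ennreal_leI)
  qed
  also have "\<dots> = ennreal (exp (3 * c\<^sup>2 * C\<^sup>2 * T)) * (\<integral>\<^sup>+x. ennreal (exp ((2*c) * Z x - (2*c)\<^sup>2 * J x)) \<partial>P)"
    by (rule nn_integral_cmult) (use Z J in measurable)
  also have "\<dots> \<le> ennreal (exp (3 * c\<^sup>2 * C\<^sup>2 * T))"
    using nn_integral_exp_ito_integral_le_1[OF ito T H_bounded H_meas, of "2*c"]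
    by (simp add: J_def mult_left_le)
  finally show ?thesis unfolding J_def .
qed

end

lemma nn_integral_indicator_le_sq:
  fixes d :: "'x \<Rightarrow> real"
  assumes dm: "(\<lambda>x. ennreal (d x)) \<in> borel_measurable P" and A: "A \<in> sets P" and c: "c > 0"
    and d0: "\<And>x. 0 \<le> d x"
    and K: "(\<integral>\<^sup>+x. ennreal (d x) ^ 2 \<partial>P) \<le> K"
  shows "(\<integral>\<^sup>+x. ennreal (d x) * indicator A x \<partial>P) \<le> ennreal c * emeasure P A + ennreal (1/c) * K"
proof -
  have "(\<integral>\<^sup>+x. ennreal (d x) * indicator A x \<partial>P) \<le> (\<integral>\<^sup>+x. ennreal c * indicator A x + ennreal (1/c) * ennreal (d x) ^ 2 \<partial>P)"
  proof (rule nn_integral_mono)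
    fix x
    show "ennreal (d x) * indicator A x \<le> ennreal c * indicator A x + ennreal (1/c) * ennreal (d x) ^ 2"
    proof (cases "x \<in> A")
      case True
      have r: "d x \<le> c + (1/c) * (d x)^2"
      proof (cases "d x \<le> c")
        case True then show ?thesis using c by (simp add: add_increasing2)
      next
        case False
        then have "d x * c \<le> d x * d x" using c d0[of x] by (intro mult_left_mono) auto
        then have "d x \<le> (1/c) * (d x)^2" using c by (simp add: field_simps power2_eq_square)
        then show ?thesis using c by simp
      qed
      have "ennreal (d x) \<le> ennreal (c + (1/c) * (d x)^2)" by (rule ennreal_leI[OF r])
      also have "\<dots> = ennreal c + ennreal (1/c) * ennreal (d x) ^ 2"
      proof -
        have e1: "ennreal (c + (1/c) * (d x)^2) = ennreal c + ennreal ((1/c) * (d x)^2)"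
          by (rule ennreal_plus) (use c in auto)
        have e2: "ennreal ((1/c) * (d x)^2) = ennreal (1/c) * ennreal ((d x)^2)"
          by (rule ennreal_mult) (use c in auto)
        have e3: "ennreal ((d x)^2) = ennreal (d x) ^ 2" by (rule ennreal_power[symmetric]) (rule d0)
        show ?thesis unfolding e1 e2 e3 ..
      qed
      finally show ?thesis using True by simp
    qed simp
  qed
  also have "\<dots> = ennreal c * emeasure P A + ennreal (1/c) * (\<integral>\<^sup>+x. ennreal (d x) ^ 2 \<partial>P)"
    using dm A by (simp add: nn_integral_add nn_integral_cmult nn_integral_cmult_indicator)
  also have "\<dots> \<le> ennreal c * emeasure P A + ennreal (1/c) * K"
    by (intro add_left_mono mult_left_mono K) auto
  finally show ?thesis .
qed

lemma ennreal_less_exists_real: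
  fixes a :: ennreal
  assumes "0 < a"
  shows "\<exists>\<delta>>0. ennreal \<delta> < a"
proof (cases "a = \<top>")
  case True then show ?thesis by (intro exI[of _ 1]) simp
next
  case False
  then obtain r where r: "a = ennreal r" "0 \<le> r" by (cases a) auto
  then have "0 < r" using assms by simp
  then show ?thesis using r by (intro exI[of _ "r/2"]) (simp add: ennreal_less_iff)
qed

lemma contiguous_density_of_sq_bounded:
  fixes d :: "nat \<Rightarrow> 'b \<Rightarrow> real"
  assumes d: "\<And>n. (\<lambda>x. ennreal (d n x)) \<in> borel_measurable (P n)"
    and d_nonneg: "\<And>n x. 0 \<le> d n x"
    and bounded: "\<And>n. (\<integral>\<^sup>+x. ennreal (d n x) ^ 2 \<partial>P n) \<le> ennreal K"
  shows "contiguous (\<lambda>n. density (P n) (\<lambda>x. ennreal (d n x))) P"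
  unfolding contiguous_def
proof (intro allI impI)
  fix A assume A: "\<forall>n. A n \<in> sets (P n)" and lim: "(\<lambda>n. emeasure (P n) (A n)) \<longlonglongrightarrow> 0"
  define K' where "K' = max K 1"
  have K': "0 < K'" "(\<integral>\<^sup>+x. ennreal (d n x) ^ 2 \<partial>P n) \<le> ennreal K'" for n
    using bounded[of n] by (auto simp: K'_def intro: order_trans ennreal_leI)
  have Q: "emeasure (density (P n) (\<lambda>x. ennreal (d n x))) (A n) \<le> ennreal c * emeasure (P n) (A n) + ennreal (1/c) * ennreal K'"
    if c: "c > 0" for c n
    using A d
    by (simp add: emeasure_density) (rule nn_integral_indicator_le_sq[OF d _ c d_nonneg K'(2)], auto)
  show "(\<lambda>n. emeasure (density (P n) (\<lambda>x. ennreal (d n x))) (A n)) \<longlonglongrightarrow> 0"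
  proof (rule order_tendstoI)
    fix a :: ennreal assume a: "0 < a"
    obtain \<delta> where \<delta>: "\<delta> > 0" "ennreal \<delta> < a" using ennreal_less_exists_real[OF a] by blast
    define c where "c = 2 * K' / \<delta>"
    have c: "c > 0" using K' \<delta> by (simp add: c_def)
    have "eventually (\<lambda>n. emeasure (P n) (A n) < ennreal (\<delta> / (2 * c))) sequentially"
      using order_tendstoD(2)[OF lim, of "ennreal (\<delta> / (2 * c))"] \<delta> c by simp
    then show "eventually (\<lambda>n. emeasure (density (P n) (\<lambda>x. ennreal (d n x))) (A n) < a) sequentially"
    proof eventually_elim
      case (elim n)
      have "emeasure (density (P n) (\<lambda>x. ennreal (d n x))) (A n)
          \<le> ennreal c * ennreal (\<delta> / (2 * c)) + ennreal (1/c) * ennreal K'"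
        using Q[OF c, of n] elim by (meson add_right_mono less_imp_le mult_left_mono order_trans zero_le)
      also have "\<dots> = ennreal \<delta>"
        using c \<delta> K' by (simp add: ennreal_mult[symmetric] ennreal_plus[symmetric] c_def field_simps)
      finally show ?case using \<delta>(2) by simp
    qed
  qed simp
qed

lemma girsanov_density_sq_bound:
  fixes t L1 L2 B e :: real and \<A> :: "'a set" and \<beta> :: 'a
    and a h :: "real \<Rightarrow> (real \<Rightarrow> real) \<Rightarrow> 'a \<Rightarrow> real" and k :: "real \<Rightarrow> real"
    and M :: "'w measure" and w X :: "real \<Rightarrow> 'w \<Rightarrow> real" and Z :: "(real \<Rightarrow> real) \<Rightarrow> real"
  assumes t_pos: "t > 0"
    and a_na: "nonanticipative t \<A> a"
    and k_mono: "mono k" and k_rc: "\<And>u. continuous (at_right u) k"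
    and a_lip: "\<And>s x1 x2 \<beta>. s \<in> {0..t} \<Longrightarrow> x1 \<in> Cpath t \<Longrightarrow> x2 \<in> Cpath t \<Longrightarrow> \<beta> \<in> \<A> \<Longrightarrow>
        \<bar>a s x1 \<beta> - a s x2 \<beta>\<bar>
          \<le> L1 * (LINT u:{0..s}|interval_measure k. \<bar>x1 u - x2 u\<bar>) + L2 * \<bar>x1 s - x2 s\<bar>"
    and a_growth: "\<And>s x \<beta>. s \<in> {0..t} \<Longrightarrow> x \<in> Cpath t \<Longrightarrow> \<beta> \<in> \<A> \<Longrightarrow>
        \<bar>a s x \<beta>\<bar> \<le> L1 * (LINT u:{0..s}|interval_measure k. 1 + \<bar>x u\<bar>) + L2 * (1 + \<bar>x s\<bar>)"
    and e: "e > 0" and \<beta>: "\<beta> \<in> \<A>"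
    and h_bounded: "\<And>s x \<gamma>. s \<in> {0..t} \<Longrightarrow> x \<in> Cpath t \<Longrightarrow> \<gamma> \<in> \<A> \<Longrightarrow> \<bar>h s x \<gamma>\<bar> \<le> B"
    and h_na: "nonanticipative t \<A> h"
    and BM: "brownian_motion M t w"
    and X: "sde_solution M t (\<lambda>s x. scaled e a s x \<beta>) w X"
    and Z: "is_ito_integral (path_law M t X) (Bsig t) t
        (\<lambda>s x. x s - (LINT u:{0..s}|lborel. scaled e a u x \<beta>))
        (\<lambda>s x. scaled e h s x \<beta>) Z"
  shows "(\<lambda>x. ennreal (exp (e * Z x - e\<^sup>2 / 2 * (LINT u:{0..t}|lborel. (scaled e h u x \<beta>)\<^sup>2))))
            \<in> borel_measurable (path_law M t X)"
    and "(\<integral>\<^sup>+x. ennreal (exp (e * Z x - e\<^sup>2 / 2 * (LINT u:{0..t}|lborel. (scaled e h u x \<beta>)\<^sup>2))) ^ 2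
            \<partial>path_law M t X) \<le> ennreal (exp (3 * t * B\<^sup>2))"
proof -
  have t: "0 \<le> t" using t_pos by simp
  interpret drift: lipschitz_path_drift t "\<bar>L1\<bar> * (k t - k (-1)) + \<bar>L2\<bar>" "\<lambda>s x. scaled e a s x \<beta>"
  proof
    show "0 \<le> \<bar>L1\<bar> * (k t - k (-1)) + \<bar>L2\<bar>"
      using monoD[OF k_mono, of "-1" t] t by simp
    show "(\<lambda>(u, x). scaled e a u x \<beta>) \<in> borel_measurable (restrict_space borel {0..s} \<Otimes>\<^sub>M Bsig t s)"
      if "s \<in> {0..t}" for s
      using a_na \<beta> that unfolding nonanticipative_def by (intro scaled_nonanticipative) auto
    show "\<And>s x1 x2 D. s \<in> {0..t} \<Longrightarrow> x1 \<in> Cpath t \<Longrightarrow> x2 \<in> Cpath t \<Longrightarrow>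
        \<forall>u\<in>{0..s}. \<bar>x1 u - x2 u\<bar> \<le> D \<Longrightarrow>
        \<bar>scaled e a s x1 \<beta> - scaled e a s x2 \<beta>\<bar> \<le> (\<bar>L1\<bar> * (k t - k (-1)) + \<bar>L2\<bar>) * D"
      using a_lip \<beta> by (intro scaled_lipschitz[OF k_mono k_rc _ e]) auto
    show "\<And>x. x \<in> Cpath t \<Longrightarrow> \<exists>C. \<forall>s\<in>{0..t}. \<bar>scaled e a s x \<beta>\<bar> \<le> C"
      using a_growth \<beta> by (intro scaled_bounded_on_path[OF k_mono k_rc _ e]) auto
  qed (rule t)
  interpret innovation: filtered_brownian_motion "path_law M t X" "Bsig t" t
    "\<lambda>s x. x s - (LINT u:{0..s}|lborel. scaled e a u x \<beta>)"
    by (rule drift.path_law_innovation_brownian[OF BM X])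
  have space_P: "space (path_law M t X) = Cpath t" and sets_P: "sets (path_law M t X) = sets (Bsig t t)"
    by (simp_all add: path_law_def)
  have H_bounded: "\<bar>scaled e h s x \<beta>\<bar> \<le> B / e" if "s \<in> {0..t}" "x \<in> space (path_law M t X)" for s x
    using h_bounded[OF that(1) scale_in_Cpath \<beta>, of x e] that e
    by (simp add: space_P scaled_def divide_right_mono)
  have "(\<lambda>(u, x). scaled e h u x \<beta>) \<in> borel_measurable (restrict_space borel {0..t} \<Otimes>\<^sub>M Bsig t t)"
    using h_na \<beta> t unfolding nonanticipative_def by (intro scaled_nonanticipative) auto
  from measurable_extend_by_zero_Icc[OF this]
  have H_meas: "(\<lambda>(x, s). if s \<in> {0..t} then scaled e h s x \<beta> else 0)
      \<in> borel_measurable (path_law M t X \<Otimes>\<^sub>M lborel)"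
    by (simp add: sets_P cong: measurable_cong_sets sets_pair_measure_cong)
  have "(\<lambda>x. LINT u:{0..t}|lborel. (scaled e h u x \<beta>)\<^sup>2) \<in> borel_measurable (path_law M t X)"
    by (rule borel_measurable_set_integral_sq[OF H_meas])
  moreover have "Z \<in> borel_measurable (path_law M t X)"
    using Z unfolding is_ito_integral_def by blast
  ultimately show "(\<lambda>x. ennreal (exp (e * Z x - e\<^sup>2 / 2 * (LINT u:{0..t}|lborel. (scaled e h u x \<beta>)\<^sup>2))))
      \<in> borel_measurable (path_law M t X)"
    by measurable
  have exponent: "3 * e\<^sup>2 * (B / e)\<^sup>2 * t = 3 * t * B\<^sup>2" using e by (simp add: power_divide)
  from innovation.nn_integral_sq_exp_ito_integral_le[OF Z t H_bounded H_meas, of e]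
  show "(\<integral>\<^sup>+x. ennreal (exp (e * Z x - e\<^sup>2 / 2 * (LINT u:{0..t}|lborel. (scaled e h u x \<beta>)\<^sup>2))) ^ 2
      \<partial>path_law M t X) \<le> ennreal (exp (3 * t * B\<^sup>2))"
    unfolding exponent .
qed

theorem proposition2p1:
  fixes t L1 L2 :: real
    and \<A> K :: "'a::euclidean_space set"
    and a h :: "real \<Rightarrow> (real \<Rightarrow> real) \<Rightarrow> 'a \<Rightarrow> real"
    and k :: "real \<Rightarrow> real"
    and Y0 :: "'a \<Rightarrow> real \<Rightarrow> real"
    and \<epsilon> :: "nat \<Rightarrow> real"
    and \<alpha> :: "nat \<Rightarrow> 'a"
    and M :: "'w measure"
    and w :: "real \<Rightarrow> 'w \<Rightarrow> real"
    and X :: "nat \<Rightarrow> real \<Rightarrow> 'w \<Rightarrow> real"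
    and Z :: "nat \<Rightarrow> (real \<Rightarrow> real) \<Rightarrow> real"
  assumes t_pos: "t > 0"
    and A_open: "open \<A>"
    and a_na: "nonanticipative t \<A> a"
    and k_mono: "mono k" and k_rc: "\<And>u. continuous (at_right u) k"
    and k_bdd: "bounded (range k)" and k_nonneg: "\<And>u. k u \<ge> 0"
    and a_lip: "\<And>s x1 x2 \<beta>. s \<in> {0..t} \<Longrightarrow> x1 \<in> Cpath t \<Longrightarrow> x2 \<in> Cpath t \<Longrightarrow> \<beta> \<in> \<A> \<Longrightarrow>
        \<bar>a s x1 \<beta> - a s x2 \<beta>\<bar>
          \<le> L1 * (LINT u:{0..s}|interval_measure k. \<bar>x1 u - x2 u\<bar>) + L2 * \<bar>x1 s - x2 s\<bar>"
    and a_growth: "\<And>s x \<beta>. s \<in> {0..t} \<Longrightarrow> x \<in> Cpath t \<Longrightarrow> \<beta> \<in> \<A> \<Longrightarrow>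
        \<bar>a s x \<beta>\<bar> \<le> L1 * (LINT u:{0..s}|interval_measure k. 1 + \<bar>x u\<bar>) + L2 * (1 + \<bar>x s\<bar>)"
    and Y0_sol: "\<And>\<beta>. \<beta> \<in> \<A> \<Longrightarrow> ode_solution t a \<beta> (Y0 \<beta>)"
    and K_compact: "compact K" and K_sub: "K \<subseteq> \<A>"
    and eps_pos: "\<And>n. \<epsilon> n > 0" and eps_dec: "decseq \<epsilon>" and eps_lim: "\<epsilon> \<longlonglongrightarrow> 0"
    and alpha_K: "\<And>n. \<alpha> n \<in> K"
    and h_H: "classH t \<A> Y0 h"
    and BM: "brownian_motion M t w"
    and X_sol: "\<And>n. sde_solution M t (\<lambda>s x. scaled (\<epsilon> n) a s x (\<alpha> n)) w (X n)"
    and Z_ito: "\<And>n. is_ito_integral (path_law M t (X n)) (Bsig t) t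
        (\<lambda>s x. x s - (LINT u:{0..s}|lborel. scaled (\<epsilon> n) a u x (\<alpha> n)))
        (\<lambda>s x. scaled (\<epsilon> n) h s x (\<alpha> n)) (Z n)"
  shows "contiguous
     (\<lambda>n. density (path_law M t (X n))
        (\<lambda>x. ennreal (exp (\<epsilon> n * Z n x
              - (\<epsilon> n)\<^sup>2 / 2 * (LINT u:{0..t}|lborel. (scaled (\<epsilon> n) h u x (\<alpha> n))\<^sup>2)))))
     (\<lambda>n. path_law M t (X n))"
proof -
  obtain B where h_bounded: "\<And>s x \<gamma>. s \<in> {0..t} \<Longrightarrow> x \<in> Cpath t \<Longrightarrow> \<gamma> \<in> \<A> \<Longrightarrow> \<bar>h s x \<gamma>\<bar> \<le> B"
    and h_na: "nonanticipative t \<A> h"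
    using h_H unfolding classH_def by blast
  have \<alpha>: "\<alpha> n \<in> \<A>" for n using alpha_K K_sub by auto
  note density_bound = girsanov_density_sq_bound[OF t_pos a_na k_mono k_rc a_lip a_growth eps_pos \<alpha>
      h_bounded h_na BM X_sol Z_ito]
  show ?thesis
    by (rule contiguous_density_of_sq_bounded) (use density_bound in auto)
qed

end
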